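(* Let $(\Omega,\Sigma,\mathbb{P})$ be a probability space and let $X$ be a Banach function space in $L_0(\Sigma)$. Then for every $\sigma(X,X_n^\sim)$-closed cone $C$ in $X$ such that $C\supset -X_+$ and $C\cap X_+=\{0\}$, there exists a strictly positive functional $\phi\in X_n^\sim$ such that $\phi(x)\le 0$ for all $x\in C$.
   Context: $L_0(\Sigma)$ is the vector lattice of real-valued measurable functions modulo a.e. equality with the a.e. order. A Banach function space is an ideal $X$ of $L_0(\Sigma)$ (i.e. $|x|\le|y|$, $y\in X$ imply $x\in X$) endowed with a complete lattice norm. $X_+=\{x\in X:x\ge0\}$. A linear functional on $X$ is order continuous if $\phi(x_\alpha)\to0$ whenever $x_\alpha\to0$ in order (i.e. there is a net $z_\beta\downarrow0$ in $X$ such that for every $\beta$ eventually $|x_\alpha|\le z_\beta$); $X_n^\sim$ is the space of order continuous linear functionals on $X$, and $\sigma(X,X_n^\sim)$ is the weak topology on $X$ induced by $X_n^\sim$. A functional $\phi$ is strictly positive if $\phi(x)>0$ for all $x\ge0$, $x\ne0$. *)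

theory Defs
  imports "HOL-Analysis.Analysis" "HOL-Probability.Probability"
begin

text \<open>Elements of L_0(Sigma) are represented by measurable functions; everything
is formulated so that it respects a.e. equality (setoid representation of the quotient).\<close>

definition ae_le :: "'a measure \<Rightarrow> ('a \<Rightarrow> real) \<Rightarrow> ('a \<Rightarrow> real) \<Rightarrow> bool" where
  "ae_le M f g \<longleftrightarrow> (AE x in M. f x \<le> g x)"

definition banach_function_space ::
  "'a measure \<Rightarrow> ('a \<Rightarrow> real) set \<Rightarrow> (('a \<Rightarrow> real) \<Rightarrow> real) \<Rightarrow> bool" where
  "banach_function_space M X N \<longleftrightarrow>
     X \<subseteq> borel_measurable M \<and>
     (\<lambda>x. 0) \<in> X \<and>
     (\<forall>f\<in>X. \<forall>g\<in>X. (\<lambda>x. f x + g x) \<in> X) \<and>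
     (\<forall>f\<in>X. \<forall>c::real. (\<lambda>x. c * f x) \<in> X) \<and>
     (\<forall>f\<in>X. \<forall>g\<in>borel_measurable M. (AE x in M. \<bar>g x\<bar> \<le> \<bar>f x\<bar>) \<longrightarrow> g \<in> X) \<and>
     (\<forall>f\<in>X. N f \<ge> 0) \<and>
     (\<forall>f\<in>X. N f = 0 \<longleftrightarrow> (AE x in M. f x = 0)) \<and>
     (\<forall>f\<in>X. \<forall>c::real. N (\<lambda>x. c * f x) = \<bar>c\<bar> * N f) \<and>
     (\<forall>f\<in>X. \<forall>g\<in>X. N ((\<lambda>x. f x + g x)) \<le> N f + N g) \<and>
     (\<forall>f\<in>X. \<forall>g\<in>X. (AE x in M. \<bar>f x\<bar> \<le> \<bar>g x\<bar>) \<longrightarrow> N f \<le> N g) \<and>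
     (\<forall>u::nat \<Rightarrow> ('a \<Rightarrow> real). (\<forall>n. u n \<in> X) \<and>
         (\<forall>e>0. \<exists>K. \<forall>m\<ge>K. \<forall>n\<ge>K. N ((\<lambda>x. u m x - u n x)) < e) \<longrightarrow>
         (\<exists>f\<in>X. (\<lambda>n. N ((\<lambda>x. u n x - f x))) \<longlonglongrightarrow> 0))"

definition directed_set :: "'i set \<Rightarrow> ('i \<Rightarrow> 'i \<Rightarrow> bool) \<Rightarrow> bool" where
  "directed_set I r \<longleftrightarrow> I \<noteq> {} \<and> (\<forall>a\<in>I. r a a) \<and>
     (\<forall>a\<in>I. \<forall>b\<in>I. \<forall>c\<in>I. r a b \<and> r b c \<longrightarrow> r a c) \<and>
     (\<forall>a\<in>I. \<forall>b\<in>I. \<exists>c\<in>I. r a c \<and> r b c)"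

definition net_eventually :: "'i set \<Rightarrow> ('i \<Rightarrow> 'i \<Rightarrow> bool) \<Rightarrow> ('i \<Rightarrow> bool) \<Rightarrow> bool" where
  "net_eventually I r P \<longleftrightarrow> (\<exists>a0\<in>I. \<forall>a\<in>I. r a0 a \<longrightarrow> P a)"

definition net_tendsto :: "'i set \<Rightarrow> ('i \<Rightarrow> 'i \<Rightarrow> bool) \<Rightarrow> ('i \<Rightarrow> real) \<Rightarrow> real \<Rightarrow> bool" where
  "net_tendsto I r y L \<longleftrightarrow> (\<forall>e>0. net_eventually I r (\<lambda>a. \<bar>y a - L\<bar> < e))"

definition decreasing_to_zero ::
  "'a measure \<Rightarrow> ('a \<Rightarrow> real) set \<Rightarrow> 'j set \<Rightarrow> ('j \<Rightarrow> 'j \<Rightarrow> bool) \<Rightarrow> ('j \<Rightarrow> ('a \<Rightarrow> real)) \<Rightarrow> bool" where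
  "decreasing_to_zero M X J s z \<longleftrightarrow> directed_set J s \<and>
     (\<forall>b\<in>J. z b \<in> X) \<and>
     (\<forall>b\<in>J. \<forall>b'\<in>J. s b b' \<longrightarrow> ae_le M (z b') (z b)) \<and>
     (\<forall>b\<in>J. ae_le M (\<lambda>x. 0) (z b)) \<and>
     (\<forall>w\<in>X. (\<forall>b\<in>J. ae_le M w (z b)) \<longrightarrow> ae_le M w (\<lambda>x. 0))"

text \<open>Order convergence to 0 of a net x in X. The dominating net is indexed by
  subsets of the function type (no loss of generality: a decreasing net may be
  reindexed by its own set of values).\<close>
definition order_null ::
  "'a measure \<Rightarrow> ('a \<Rightarrow> real) set \<Rightarrow> 'i set \<Rightarrow> ('i \<Rightarrow> 'i \<Rightarrow> bool) \<Rightarrow> ('i \<Rightarrow> ('a \<Rightarrow> real)) \<Rightarrow> bool" where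
  "order_null M X I r x \<longleftrightarrow> (\<forall>a\<in>I. x a \<in> X) \<and>
     (\<exists>(J :: ('a \<Rightarrow> real) set) s (z :: ('a \<Rightarrow> real) \<Rightarrow> ('a \<Rightarrow> real)).
        decreasing_to_zero M X J s z \<and>
        (\<forall>b\<in>J. net_eventually I r (\<lambda>a. ae_le M (\<lambda>\<omega>. \<bar>x a \<omega>\<bar>) (z b))))"

definition linear_functional_on :: "'a measure \<Rightarrow> ('a \<Rightarrow> real) set \<Rightarrow> (('a \<Rightarrow> real) \<Rightarrow> real) \<Rightarrow> bool" where
  "linear_functional_on M X \<phi> \<longleftrightarrow>
     (\<forall>f\<in>X. \<forall>g\<in>X. \<phi> ((\<lambda>x. f x + g x)) = \<phi> f + \<phi> g) \<and>
     (\<forall>f\<in>X. \<forall>c::real. \<phi> (\<lambda>x. c * f x) = c * \<phi> f) \<and>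
     (\<forall>f\<in>X. \<forall>g\<in>X. (AE x in M. f x = g x) \<longrightarrow> \<phi> f = \<phi> g)"

text \<open>Order continuity, tested on nets indexed by subsets of the function type
  (equivalent to arbitrary index sets, by reindexing along the dominating net).\<close>
definition order_continuous :: "'a measure \<Rightarrow> ('a \<Rightarrow> real) set \<Rightarrow> (('a \<Rightarrow> real) \<Rightarrow> real) \<Rightarrow> bool" where
  "order_continuous M X \<phi> \<longleftrightarrow>
     (\<forall>(I :: ('a \<Rightarrow> real) set) r (x :: ('a \<Rightarrow> real) \<Rightarrow> ('a \<Rightarrow> real)).
        directed_set I r \<and> order_null M X I r x \<longrightarrow> net_tendsto I r (\<lambda>a. \<phi> (x a)) 0)"

definition order_cont_dual :: "'a measure \<Rightarrow> ('a \<Rightarrow> real) set \<Rightarrow> (('a \<Rightarrow> real) \<Rightarrow> real) set" where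
  "order_cont_dual M X = {\<phi>. linear_functional_on M X \<phi> \<and> order_continuous M X \<phi>}"

definition weak_topology :: "'a measure \<Rightarrow> ('a \<Rightarrow> real) set \<Rightarrow> ('a \<Rightarrow> real) topology" where
  "weak_topology M X = topology_generated_by
     {{f \<in> X. \<phi> f \<in> U} | \<phi> U. \<phi> \<in> order_cont_dual M X \<and> open U}"

definition strictly_positive :: "'a measure \<Rightarrow> ('a \<Rightarrow> real) set \<Rightarrow> (('a \<Rightarrow> real) \<Rightarrow> real) \<Rightarrow> bool" where
  "strictly_positive M X \<phi> \<longleftrightarrow>
     (\<forall>f\<in>X. ae_le M (\<lambda>x. 0) f \<and> \<not> (AE x in M. f x = 0) \<longrightarrow> \<phi> f > 0)"

end

theory Submission
  imports Defs
begin

text \<open>Separation in the weak topology \<open>\<sigma>(X, X\<^sub>n\<^sup>\<sim>)\<close>, reduced to finitely many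
  coordinates by a basic neighbourhood, yields for every \<open>f \<ge> 0\<close>, \<open>f \<noteq> 0\<close>, an order continuous
  \<open>\<psi> \<le> 0\<close> on \<open>C\<close> with \<open>\<psi> f > 0\<close>; as \<open>-X\<^sub>+ \<subseteq> C\<close>, every such \<open>\<psi>\<close> is positive. A
  positive functional vanishes on all elements supported in certain sets, and on the probability
  space the measure of the largest such set can be minimised: countable positive combinations
  \<open>\<Sum> c\<^sub>n \<psi>\<^sub>n\<close> stay order continuous because positive functionals are norm bounded. At a
  minimiser no nonzero \<open>f \<ge> 0\<close> can be annihilated, so the minimiser is strictly positive.\<close>

locale bfs =
  fixes M :: "'a measure" and X :: "('a \<Rightarrow> real) set" and N :: "('a \<Rightarrow> real) \<Rightarrow> real"
  assumes bfs: "banach_function_space M X N"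
begin

lemma X_measurable: "f \<in> X \<Longrightarrow> f \<in> borel_measurable M"
  and X_zero: "(\<lambda>x. 0) \<in> X"
  and X_add: "f \<in> X \<Longrightarrow> g \<in> X \<Longrightarrow> (\<lambda>x. f x + g x) \<in> X"
  and X_smult: "f \<in> X \<Longrightarrow> (\<lambda>x. c * f x) \<in> X"
  and X_solid: "f \<in> X \<Longrightarrow> g \<in> borel_measurable M \<Longrightarrow> (AE x in M. \<bar>g x\<bar> \<le> \<bar>f x\<bar>) \<Longrightarrow> g \<in> X"
  and N_nonneg: "f \<in> X \<Longrightarrow> 0 \<le> N f"
  and N_eq_0_iff: "f \<in> X \<Longrightarrow> N f = 0 \<longleftrightarrow> (AE x in M. f x = 0)"
  and N_smult: "f \<in> X \<Longrightarrow> N (\<lambda>x. c * f x) = \<bar>c\<bar> * N f"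
  and N_triangle: "f \<in> X \<Longrightarrow> g \<in> X \<Longrightarrow> N (\<lambda>x. f x + g x) \<le> N f + N g"
  and N_mono: "f \<in> X \<Longrightarrow> g \<in> X \<Longrightarrow> (AE x in M. \<bar>f x\<bar> \<le> \<bar>g x\<bar>) \<Longrightarrow> N f \<le> N g"
  and N_complete: "(\<And>n. u n \<in> X) \<Longrightarrow>
     (\<forall>e>0. \<exists>K. \<forall>m\<ge>K. \<forall>n\<ge>K. N (\<lambda>x. u m x - u n x) < e) \<Longrightarrow>
     \<exists>f\<in>X. (\<lambda>n. N (\<lambda>x. u n x - f x)) \<longlonglongrightarrow> 0"
  using bfs unfolding banach_function_space_def by blast+

lemma X_diff: "f \<in> X \<Longrightarrow> g \<in> X \<Longrightarrow> (\<lambda>x. f x - g x) \<in> X"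
  using X_add[of f "\<lambda>x. (-1) * g x"] X_smult[of g "-1"] by simp

lemma X_abs: "f \<in> X \<Longrightarrow> (\<lambda>x. \<bar>f x\<bar>) \<in> X"
  by (rule X_solid[of f]) (auto dest: X_measurable)

lemma X_sum: "finite S \<Longrightarrow> (\<And>i. i \<in> S \<Longrightarrow> u i \<in> X) \<Longrightarrow> (\<lambda>x. \<Sum>i\<in>S. u i x) \<in> X"
  by (induction S rule: finite_induct) (auto intro: X_zero X_add)

lemma X_indicator_mult: "h \<in> X \<Longrightarrow> A \<in> sets M \<Longrightarrow> (\<lambda>x. indicator A x * h x) \<in> X"
  by (rule X_solid[of h]) (auto simp: indicator_def dest: X_measurable)

lemma N_zero: "N (\<lambda>x. 0) = 0"
  using N_eq_0_iff[OF X_zero] by simp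

lemma N_abs: "f \<in> X \<Longrightarrow> N (\<lambda>x. \<bar>f x\<bar>) = N f"
  using N_mono[of f "\<lambda>x. \<bar>f x\<bar>"] N_mono[of "\<lambda>x. \<bar>f x\<bar>" f] X_abs[of f] by force

lemma N_diff_commute: "f \<in> X \<Longrightarrow> g \<in> X \<Longrightarrow> N (\<lambda>x. f x - g x) = N (\<lambda>x. g x - f x)"
  using N_smult[OF X_diff[of f g], of "-1"] by simp

lemma N_sum_le: "finite S \<Longrightarrow> (\<And>i. i \<in> S \<Longrightarrow> u i \<in> X) \<Longrightarrow> N (\<lambda>x. \<Sum>i\<in>S. u i x) \<le> (\<Sum>i\<in>S. N (u i))"
proof (induction S rule: finite_induct)
  case empty
  then show ?case by (simp add: N_zero)
next
  case (insert a F)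
  have "N (\<lambda>x. \<Sum>i\<in>insert a F. u i x) = N (\<lambda>x. u a x + (\<Sum>i\<in>F. u i x))"
    using insert.hyps by simp
  also have "\<dots> \<le> N (u a) + N (\<lambda>x. \<Sum>i\<in>F. u i x)"
    using insert by (intro N_triangle X_sum) auto
  also have "\<dots> \<le> N (u a) + (\<Sum>i\<in>F. N (u i))"
    using insert by simp
  finally show ?case
    using insert.hyps by simp
qed

end

lemma linear_functional_on_add:
    "linear_functional_on M X \<phi> \<Longrightarrow> f \<in> X \<Longrightarrow> g \<in> X \<Longrightarrow> \<phi> (\<lambda>x. f x + g x) = \<phi> f + \<phi> g"
  and linear_functional_on_smult:
    "linear_functional_on M X \<phi> \<Longrightarrow> f \<in> X \<Longrightarrow> \<phi> (\<lambda>x. c * f x) = c * \<phi> f"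
  and linear_functional_on_AE_cong:
    "linear_functional_on M X \<phi> \<Longrightarrow> f \<in> X \<Longrightarrow> g \<in> X \<Longrightarrow> (AE x in M. f x = g x) \<Longrightarrow> \<phi> f = \<phi> g"
  unfolding linear_functional_on_def by blast+

context bfs
begin

lemma linear_functional_on_zero: "linear_functional_on M X \<phi> \<Longrightarrow> \<phi> (\<lambda>x. 0) = 0"
  using linear_functional_on_smult[OF _ X_zero, of M \<phi> 0] by simp

lemma linear_functional_on_diff:
  "linear_functional_on M X \<phi> \<Longrightarrow> f \<in> X \<Longrightarrow> g \<in> X \<Longrightarrow> \<phi> (\<lambda>x. f x - g x) = \<phi> f - \<phi> g"
  using linear_functional_on_add[OF _ _ X_smult[of g "-1"], of M \<phi> f]
    linear_functional_on_smult[of M X \<phi> g "-1"] by simp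

lemma linear_functional_on_AE_zero:
  "linear_functional_on M X \<phi> \<Longrightarrow> f \<in> X \<Longrightarrow> (AE x in M. f x = 0) \<Longrightarrow> \<phi> f = 0"
  using linear_functional_on_AE_cong[OF _ _ X_zero] linear_functional_on_zero by metis

lemma linear_functional_on_sum:
  assumes "linear_functional_on M X \<phi>"
  shows "finite S \<Longrightarrow> (\<And>i. i \<in> S \<Longrightarrow> u i \<in> X) \<Longrightarrow> \<phi> (\<lambda>x. \<Sum>i\<in>S. u i x) = (\<Sum>i\<in>S. \<phi> (u i))"
proof (induction S rule: finite_induct)
  case empty
  then show ?case using linear_functional_on_zero[OF assms] by simp
next
  case (insert a F)
  then show ?case
    using linear_functional_on_add[OF assms, of "u a" "\<lambda>x. \<Sum>i\<in>F. u i x"] X_sum[of F u] by simp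
qed

definition positive_functional :: "(('a \<Rightarrow> real) \<Rightarrow> real) \<Rightarrow> bool" where
  "positive_functional \<phi> \<longleftrightarrow> (\<forall>g\<in>X. (AE x in M. 0 \<le> g x) \<longrightarrow> 0 \<le> \<phi> g)"

lemma positive_functionalD: "positive_functional \<phi> \<Longrightarrow> g \<in> X \<Longrightarrow> (AE x in M. 0 \<le> g x) \<Longrightarrow> 0 \<le> \<phi> g"
  unfolding positive_functional_def by blast

lemma positive_functional_mono:
  assumes "linear_functional_on M X \<phi>" "positive_functional \<phi>" "f \<in> X" "g \<in> X"
    and "AE x in M. f x \<le> g x"
  shows "\<phi> f \<le> \<phi> g"
proof -
  have "0 \<le> \<phi> (\<lambda>x. g x - f x)"
    using assms by (intro positive_functionalD X_diff) (auto elim!: AE_mp)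
  then show ?thesis
    using linear_functional_on_diff[OF assms(1,4,3)] by simp
qed

lemma positive_functional_abs_le:
  assumes "linear_functional_on M X \<phi>" "positive_functional \<phi>" "f \<in> X"
  shows "\<bar>\<phi> f\<bar> \<le> \<phi> (\<lambda>x. \<bar>f x\<bar>)"
proof -
  have "\<phi> f \<le> \<phi> (\<lambda>x. \<bar>f x\<bar>)"
    using assms by (intro positive_functional_mono X_abs) auto
  moreover have "\<phi> (\<lambda>x. -1 * f x) \<le> \<phi> (\<lambda>x. \<bar>f x\<bar>)"
    using assms by (intro positive_functional_mono X_abs X_smult) auto
  ultimately show ?thesis
    using linear_functional_on_smult[OF assms(1,3), of "-1"] by simp
qed

end

lemma net_eventually_mono:
  "net_eventually I r P \<Longrightarrow> (\<And>a. a \<in> I \<Longrightarrow> P a \<Longrightarrow> Q a) \<Longrightarrow> net_eventually I r Q"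
  unfolding net_eventually_def by blast

lemma net_eventually_conj:
  assumes "directed_set I r" "net_eventually I r P" "net_eventually I r Q"
  shows "net_eventually I r (\<lambda>a. P a \<and> Q a)"
proof -
  obtain a1 a2 where a: "a1 \<in> I" "\<forall>a\<in>I. r a1 a \<longrightarrow> P a" "a2 \<in> I" "\<forall>a\<in>I. r a2 a \<longrightarrow> Q a"
    using assms(2,3) unfolding net_eventually_def by blast
  then obtain c where c: "c \<in> I" "r a1 c" "r a2 c"
    using assms(1) unfolding directed_set_def by blast
  have "P a \<and> Q a" if "a \<in> I" "r c a" for a
  proof -
    have "r a1 a" "r a2 a"
      using assms(1) a(1,3) c that unfolding directed_set_def by blast+
    then show ?thesis
      using a that by blast
  qed
  then show ?thesis
    using c(1) unfolding net_eventually_def by blast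
qed

lemma net_eventuallyI: "directed_set I r \<Longrightarrow> (\<And>a. a \<in> I \<Longrightarrow> P a) \<Longrightarrow> net_eventually I r P"
  unfolding net_eventually_def directed_set_def by blast

lemma net_tendsto_zero: "directed_set I r \<Longrightarrow> net_tendsto I r (\<lambda>a. 0) 0"
  unfolding net_tendsto_def by (auto intro: net_eventuallyI)

lemma net_tendsto_add:
  assumes "directed_set I r" "net_tendsto I r f 0" "net_tendsto I r g 0"
  shows "net_tendsto I r (\<lambda>a. f a + g a) 0"
  unfolding net_tendsto_def
proof (intro allI impI)
  fix e :: real
  assume "e > 0"
  then have "net_eventually I r (\<lambda>a. \<bar>f a - 0\<bar> < e/2)" "net_eventually I r (\<lambda>a. \<bar>g a - 0\<bar> < e/2)"
    using assms(2,3) unfolding net_tendsto_def by (meson half_gt_zero)+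
  then have "net_eventually I r (\<lambda>a. \<bar>f a - 0\<bar> < e/2 \<and> \<bar>g a - 0\<bar> < e/2)"
    by (rule net_eventually_conj[OF assms(1)])
  then show "net_eventually I r (\<lambda>a. \<bar>f a + g a - 0\<bar> < e)"
    by (rule net_eventually_mono) auto
qed

lemma net_tendsto_cmult:
  assumes "net_tendsto I r f 0"
  shows "net_tendsto I r (\<lambda>a. c * f a) 0"
  unfolding net_tendsto_def
proof (intro allI impI)
  fix e :: real
  assume "e > 0"
  then have "net_eventually I r (\<lambda>a. \<bar>f a - 0\<bar> < e / (\<bar>c\<bar> + 1))"
    using assms unfolding net_tendsto_def by simp
  then show "net_eventually I r (\<lambda>a. \<bar>c * f a - 0\<bar> < e)"
  proof (rule net_eventually_mono)
    fix a
    assume "\<bar>f a - 0\<bar> < e / (\<bar>c\<bar> + 1)"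
    then have "\<bar>f a\<bar> * (\<bar>c\<bar> + 1) < e"
      by (simp add: field_simps)
    moreover have "\<bar>c * f a\<bar> \<le> \<bar>f a\<bar> * (\<bar>c\<bar> + 1)"
      by (simp add: abs_mult algebra_simps)
    ultimately show "\<bar>c * f a - 0\<bar> < e"
      by simp
  qed
qed

lemma net_tendsto_sum:
  assumes "directed_set I r"
  shows "finite S \<Longrightarrow> (\<And>i. i \<in> S \<Longrightarrow> net_tendsto I r (f i) 0) \<Longrightarrow> net_tendsto I r (\<lambda>a. \<Sum>i\<in>S. f i a) 0"
proof (induction S rule: finite_induct)
  case empty
  then show ?case using net_tendsto_zero[OF assms] by simp
next
  case (insert i S)
  then show ?case using net_tendsto_add[OF assms, of "f i" "\<lambda>a. \<Sum>i\<in>S. f i a"] by simp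
qed

lemma order_continuousI:
  "(\<And>(I :: ('a \<Rightarrow> real) set) r (x :: ('a \<Rightarrow> real) \<Rightarrow> 'a \<Rightarrow> real).
      directed_set I r \<Longrightarrow> order_null M X I r x \<Longrightarrow> net_tendsto I r (\<lambda>a. \<phi> (x a)) 0)
   \<Longrightarrow> order_continuous M X \<phi>"
  unfolding order_continuous_def by blast

lemma order_continuousD:
  "order_continuous (M :: 'a measure) X \<phi> \<Longrightarrow> directed_set (I :: ('a \<Rightarrow> real) set) r
   \<Longrightarrow> order_null M X I r x \<Longrightarrow> net_tendsto I r (\<lambda>a. \<phi> (x a)) 0"
  unfolding order_continuous_def by blast

lemma order_cont_dualD:
  "\<phi> \<in> order_cont_dual M X \<Longrightarrow> linear_functional_on M X \<phi>"
  "\<phi> \<in> order_cont_dual M X \<Longrightarrow> order_continuous M X \<phi>"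
  unfolding order_cont_dual_def by blast+

lemma order_cont_dual_zero: "(\<lambda>g. 0) \<in> order_cont_dual M X"
proof -
  have "order_continuous M X (\<lambda>g. 0)"
    by (rule order_continuousI) (rule net_tendsto_zero)
  then show ?thesis
    unfolding order_cont_dual_def linear_functional_on_def by simp
qed

lemma order_cont_dual_add:
  assumes "\<phi> \<in> order_cont_dual M X" "\<psi> \<in> order_cont_dual M X"
  shows "(\<lambda>g. \<phi> g + \<psi> g) \<in> order_cont_dual M X"
proof -
  note lf = order_cont_dualD(1)[OF assms(1)] order_cont_dualD(1)[OF assms(2)]
  have "linear_functional_on M X (\<lambda>g. \<phi> g + \<psi> g)"
    unfolding linear_functional_on_def
  proof (intro conjI ballI allI impI)
    fix f g
    assume "f \<in> X" "g \<in> X"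
    then show "\<phi> (\<lambda>x. f x + g x) + \<psi> (\<lambda>x. f x + g x) = \<phi> f + \<psi> f + (\<phi> g + \<psi> g)"
      using linear_functional_on_add[OF lf(1)] linear_functional_on_add[OF lf(2)] by simp
  next
    fix f c
    assume "f \<in> X"
    then show "\<phi> (\<lambda>x. c * f x) + \<psi> (\<lambda>x. c * f x) = c * (\<phi> f + \<psi> f)"
      using linear_functional_on_smult[OF lf(1)] linear_functional_on_smult[OF lf(2)]
      by (simp add: distrib_left)
  next
    fix f g
    assume "f \<in> X" "g \<in> X" "AE x in M. f x = g x"
    then show "\<phi> f + \<psi> f = \<phi> g + \<psi> g"
      using linear_functional_on_AE_cong[OF lf(1)] linear_functional_on_AE_cong[OF lf(2)] by metis
  qed
  moreover have "order_continuous M X (\<lambda>g. \<phi> g + \<psi> g)"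
  proof (rule order_continuousI)
    fix I :: "('a \<Rightarrow> real) set" and r x
    assume h: "directed_set I r" "order_null M X I r x"
    show "net_tendsto I r (\<lambda>a. \<phi> (x a) + \<psi> (x a)) 0"
      using net_tendsto_add[OF h(1) order_continuousD[OF order_cont_dualD(2)[OF assms(1)] h]
          order_continuousD[OF order_cont_dualD(2)[OF assms(2)] h]] .
  qed
  ultimately show ?thesis
    unfolding order_cont_dual_def by blast
qed

lemma order_cont_dual_cmult:
  assumes "\<phi> \<in> order_cont_dual M X"
  shows "(\<lambda>g. c * \<phi> g) \<in> order_cont_dual M X"
proof -
  note lf = order_cont_dualD(1)[OF assms]
  have "linear_functional_on M X (\<lambda>g. c * \<phi> g)"
    unfolding linear_functional_on_def
  proof (intro conjI ballI allI impI)
    fix f g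
    assume "f \<in> X" "g \<in> X"
    then show "c * \<phi> (\<lambda>x. f x + g x) = c * \<phi> f + c * \<phi> g"
      using linear_functional_on_add[OF lf] by (simp add: distrib_left)
  next
    fix f d
    assume "f \<in> X"
    then show "c * \<phi> (\<lambda>x. d * f x) = d * (c * \<phi> f)"
      using linear_functional_on_smult[OF lf] by simp
  next
    fix f g
    assume "f \<in> X" "g \<in> X" "AE x in M. f x = g x"
    then show "c * \<phi> f = c * \<phi> g"
      using linear_functional_on_AE_cong[OF lf] by metis
  qed
  moreover have "order_continuous M X (\<lambda>g. c * \<phi> g)"
  proof (rule order_continuousI)
    fix I :: "('a \<Rightarrow> real) set" and r x
    assume h: "directed_set I r" "order_null M X I r x"
    show "net_tendsto I r (\<lambda>a. c * \<phi> (x a)) 0"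
      using net_tendsto_cmult[OF order_continuousD[OF order_cont_dualD(2)[OF assms] h]] .
  qed
  ultimately show ?thesis
    unfolding order_cont_dual_def by blast
qed

lemma order_cont_dual_sum:
  "finite S \<Longrightarrow> (\<And>i. i \<in> S \<Longrightarrow> \<phi> i \<in> order_cont_dual M X)
   \<Longrightarrow> (\<lambda>g. \<Sum>i\<in>S. \<phi> i g) \<in> order_cont_dual M X"
proof (induction S rule: finite_induct)
  case empty
  then show ?case using order_cont_dual_zero by simp
next
  case (insert i S)
  then show ?case using order_cont_dual_add[of "\<phi> i" M X "\<lambda>g. \<Sum>i\<in>S. \<phi> i g"] by simp
qed

text \<open>Order continuity is only postulated for nets indexed by functions, so a sequence is
  turned into a net indexed by the constant functions \<open>\<lambda>_. real n\<close>.\<close>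

definition nat_index :: "('a \<Rightarrow> real) \<Rightarrow> nat" where
  "nat_index a = nat \<lfloor>a undefined\<rfloor>"

definition nat_net :: "('a \<Rightarrow> real) set" where
  "nat_net = range (\<lambda>n _. real n)"

definition nat_net_le :: "('a \<Rightarrow> real) \<Rightarrow> ('a \<Rightarrow> real) \<Rightarrow> bool" where
  "nat_net_le a b \<longleftrightarrow> nat_index a \<le> nat_index b"

lemma nat_index_const [simp]: "nat_index (\<lambda>_. real n) = n"
  by (simp add: nat_index_def)

lemma directed_set_nat_net: "directed_set nat_net nat_net_le"
  unfolding directed_set_def nat_net_def nat_net_le_def
proof (intro conjI ballI)
  fix a b :: "'a \<Rightarrow> real"
  assume "a \<in> range (\<lambda>n _. real n)" "b \<in> range (\<lambda>n _. real n)"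
  then show "\<exists>c\<in>range (\<lambda>n _. real n). nat_index a \<le> nat_index c \<and> nat_index b \<le> nat_index c"
    by (intro bexI[of _ "\<lambda>_. real (max (nat_index a) (nat_index b))"]) auto
qed auto

lemma net_eventually_nat_net_iff:
  "net_eventually (nat_net :: ('a \<Rightarrow> real) set) nat_net_le (\<lambda>a. P (nat_index a)) \<longleftrightarrow>
   eventually P sequentially" (is "?L \<longleftrightarrow> ?R")
proof
  assume ?L
  then obtain a0 :: "'a \<Rightarrow> real"
    where a0: "\<And>a. a \<in> nat_net \<Longrightarrow> nat_net_le a0 a \<Longrightarrow> P (nat_index a)"
    unfolding net_eventually_def by blast
  have "P n" if "nat_index a0 \<le> n" for n
    using a0[of "\<lambda>_. real n"] that by (simp add: nat_net_def nat_net_le_def)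
  then show ?R
    unfolding eventually_sequentially by blast
next
  assume ?R
  then obtain k where "\<And>n. k \<le> n \<Longrightarrow> P n"
    unfolding eventually_sequentially by blast
  then show ?L
    unfolding net_eventually_def nat_net_def nat_net_le_def by (intro bexI[of _ "\<lambda>_. real k"]) auto
qed

context bfs
begin

lemma order_continuous_tendsto_seq:
  assumes oc: "order_continuous M X \<phi>"
    and x: "\<And>n. x n \<in> X" and z: "\<And>n. z n \<in> X"
    and dom: "\<And>n. AE \<omega> in M. \<bar>x n \<omega>\<bar> \<le> z n \<omega>"
    and dec: "AE \<omega> in M. \<forall>m n. m \<le> n \<longrightarrow> z n \<omega> \<le> z m \<omega>"
    and nonneg: "\<And>n. AE \<omega> in M. 0 \<le> z n \<omega>"
    and vanish: "AE \<omega> in M. \<exists>n. z n \<omega> = 0"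
  shows "(\<lambda>n. \<phi> (x n)) \<longlonglongrightarrow> 0"
proof -
  have z_antimono: "AE \<omega> in M. z n \<omega> \<le> z m \<omega>" if "m \<le> n" for m n
    using dec that by (auto elim!: AE_mp)
  have "decreasing_to_zero M X (nat_net :: ('a \<Rightarrow> real) set) nat_net_le (\<lambda>a. z (nat_index a))"
    unfolding decreasing_to_zero_def
  proof (intro conjI ballI impI)
    fix w
    assume "w \<in> X" "\<forall>b\<in>nat_net. ae_le M w (z (nat_index b))"
    then have "AE \<omega> in M. w \<omega> \<le> z n \<omega>" for n
      using nat_index_const[of n] unfolding nat_net_def ae_le_def by (metis rangeI)
    then have "AE \<omega> in M. \<forall>n. w \<omega> \<le> z n \<omega>"
      by (simp add: AE_all_countable)
    then show "ae_le M w (\<lambda>x. 0)"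
      unfolding ae_le_def using vanish by eventually_elim metis
  next
    fix b b' :: "'a \<Rightarrow> real"
    assume "b \<in> nat_net" "b' \<in> nat_net" "nat_net_le b b'"
    then show "ae_le M (z (nat_index b')) (z (nat_index b))"
      using z_antimono[of "nat_index b" "nat_index b'"] unfolding ae_le_def nat_net_le_def by blast
  qed (use directed_set_nat_net z nonneg in \<open>simp_all add: ae_le_def\<close>)
  moreover have "net_eventually (nat_net :: ('a \<Rightarrow> real) set) nat_net_le
      (\<lambda>a. ae_le M (\<lambda>\<omega>. \<bar>x (nat_index a) \<omega>\<bar>) (z (nat_index b)))" for b :: "'a \<Rightarrow> real"
  proof -
    have "ae_le M (\<lambda>\<omega>. \<bar>x n \<omega>\<bar>) (z (nat_index b))" if "nat_index b \<le> n" for n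
      unfolding ae_le_def using z_antimono[OF that] dom[of n] by eventually_elim linarith
    then have "eventually (\<lambda>n. ae_le M (\<lambda>\<omega>. \<bar>x n \<omega>\<bar>) (z (nat_index b))) sequentially"
      unfolding eventually_sequentially by blast
    then show ?thesis
      using net_eventually_nat_net_iff[where P = "\<lambda>n. ae_le M (\<lambda>\<omega>. \<bar>x n \<omega>\<bar>) (z (nat_index b))"]
      by simp
  qed
  ultimately have "order_null M X (nat_net :: ('a \<Rightarrow> real) set) nat_net_le (\<lambda>a. x (nat_index a))"
    unfolding order_null_def using x by blast
  then have tendsto: "net_tendsto (nat_net :: ('a \<Rightarrow> real) set) nat_net_le (\<lambda>a. \<phi> (x (nat_index a))) 0"
    by (rule order_continuousD[OF oc directed_set_nat_net])
  show ?thesis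
  proof (rule LIMSEQ_I)
    fix e :: real
    assume "0 < e"
    then have "net_eventually (nat_net :: ('a \<Rightarrow> real) set) nat_net_le
        (\<lambda>a. \<bar>\<phi> (x (nat_index a)) - 0\<bar> < e)"
      using tendsto unfolding net_tendsto_def by blast
    then show "\<exists>k. \<forall>n\<ge>k. norm (\<phi> (x n) - 0) < e"
      unfolding net_eventually_nat_net_iff[where P = "\<lambda>n. \<bar>\<phi> (x n) - 0\<bar> < e"] eventually_sequentially
      by simp
  qed
qed

end

lemma sum_half_powers_atLeastLessThan:
  "k \<le> m \<Longrightarrow> (\<Sum>n\<in>{k..<m}. (1/2::real)^n) = 2 * (1/2)^k - 2 * (1/2)^m"
proof (induction m)
  case (Suc m)
  show ?case
  proof (cases "k = Suc m")
    case False
    then have "k \<le> m"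
      using Suc.prems by simp
    then show ?thesis
      using Suc.IH by simp
  qed simp
qed simp

context bfs
begin

lemma N_tendsto_upper_bound:
  assumes u: "\<And>k. u k \<in> X" and f: "f \<in> X"
    and incseq: "\<And>k m x. k \<le> m \<Longrightarrow> u k x \<le> u m x"
    and lim: "(\<lambda>n. N (\<lambda>x. u n x - f x)) \<longlonglongrightarrow> 0"
  shows "AE x in M. u k x \<le> f x"
proof -
  define w where "w = (\<lambda>x. max (u k x - f x) 0)"
  have w: "w \<in> X"
    unfolding w_def
    by (rule X_solid[OF X_diff[OF u[of k] f]]) (use X_measurable[OF u] X_measurable[OF f] in auto)
  have "N w \<le> N (\<lambda>x. u m x - f x)" if "k \<le> m" for m
  proof (rule N_mono[OF w X_diff[OF u f]], rule AE_I2)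
    fix x
    show "\<bar>w x\<bar> \<le> \<bar>u m x - f x\<bar>"
      using incseq[OF that, of x] by (auto simp: w_def)
  qed
  then have "N w \<le> 0"
    using LIMSEQ_le_const[OF lim, of "N w"] by blast
  then have "AE x in M. w x = 0"
    using N_nonneg[OF w] N_eq_0_iff[OF w] by simp
  then show ?thesis
    by eventually_elim (auto simp: w_def)
qed

text \<open>The series converges in \<open>X\<close> by completeness of the norm; its sum bounds the partial sums.\<close>

lemma half_power_series_bounded:
  assumes h: "\<And>n. h n \<in> X" and h_nonneg: "\<And>n x. 0 \<le> h n x" and h_norm: "\<And>n. N (h n) \<le> 1"
  shows "\<exists>f\<in>X. \<forall>k. AE x in M. (\<Sum>n<k. (1/2)^n * h n x) \<le> f x"
proof -
  define u where "u k = (\<lambda>x. \<Sum>n<k. (1/2)^n * h n x)" for k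
  have summand: "(\<lambda>x. (1/2)^n * h n x) \<in> X" for n
    by (rule X_smult[OF h])
  have u: "u k \<in> X" for k
    unfolding u_def by (rule X_sum) (auto intro: summand)
  have u_diff: "N (\<lambda>x. u m x - u k x) \<le> 2 * (1/2)^k" if "k \<le> m" for k m
  proof -
    have "{..<m} = {..<k} \<union> {k..<m}" "{..<k} \<inter> {k..<m} = {}"
      using that by auto
    then have "(\<lambda>x. u m x - u k x) = (\<lambda>x. \<Sum>n\<in>{k..<m}. (1/2)^n * h n x)"
      unfolding u_def by (simp add: sum.union_disjoint)
    then have "N (\<lambda>x. u m x - u k x) \<le> (\<Sum>n\<in>{k..<m}. N (\<lambda>x. (1/2)^n * h n x))"
      using N_sum_le[of "{k..<m}" "\<lambda>n x. (1/2)^n * h n x"] summand by simp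
    also have "\<dots> \<le> (\<Sum>n\<in>{k..<m}. (1/2)^n)"
    proof (rule sum_mono)
      fix n
      show "N (\<lambda>x. (1/2)^n * h n x) \<le> (1/2)^n"
        using N_smult[OF h, of "(1/2)^n" n] h_norm[of n] by (simp add: mult_left_le)
    qed
    also have "\<dots> \<le> 2 * (1/2)^k"
      using sum_half_powers_atLeastLessThan[OF that] by simp
    finally show ?thesis .
  qed
  have "\<exists>f\<in>X. (\<lambda>n. N (\<lambda>x. u n x - f x)) \<longlonglongrightarrow> 0"
  proof (rule N_complete[OF u], intro allI impI)
    fix e :: real
    assume "e > 0"
    then obtain K where K: "(1/2::real)^K < e/2"
      using real_arch_pow_inv[of "e/2" "1/2"] by auto
    have small: "2 * (1/2::real)^j < e" if "K \<le> j" for j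
    proof -
      have "(1/2::real)^j \<le> (1/2)^K"
        using that by (simp add: power_decreasing)
      then show ?thesis
        using K by linarith
    qed
    have "N (\<lambda>x. u m x - u n x) < e" if "K \<le> m" "K \<le> n" for m n
    proof (cases "n \<le> m")
      case True
      then show ?thesis using u_diff[OF True] small[OF that(2)] by linarith
    next
      case False
      then show ?thesis using u_diff[of m n] small[OF that(1)] N_diff_commute[OF u u, of m n] by linarith
    qed
    then show "\<exists>K. \<forall>m\<ge>K. \<forall>n\<ge>K. N (\<lambda>x. u m x - u n x) < e"
      by blast
  qed
  then obtain f where f: "f \<in> X" and lim: "(\<lambda>n. N (\<lambda>x. u n x - f x)) \<longlonglongrightarrow> 0"
    by blast
  have "u k x \<le> u m x" if "k \<le> m" for k m x
    unfolding u_def using that h_nonneg by (intro sum_mono2) auto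
  then have "AE x in M. u k x \<le> f x" for k
    by (rule N_tendsto_upper_bound[OF u f _ lim])
  then show ?thesis
    using f unfolding u_def by blast
qed

lemma positive_functional_bounded:
  assumes lf: "linear_functional_on M X \<phi>" and pos: "positive_functional \<phi>"
  shows "\<exists>K\<ge>0. \<forall>g\<in>X. \<bar>\<phi> g\<bar> \<le> K * N g"
proof (rule ccontr)
  assume "\<not> ?thesis"
  then have "\<forall>n::nat. \<exists>g. g \<in> X \<and> 4^n * N g < \<bar>\<phi> g\<bar>"
    by (metis not_le zero_le_numeral zero_le_power)
  then obtain g where g: "\<And>n. g n \<in> X" and big: "\<And>n. 4^n * N (g n) < \<bar>\<phi> (g n)\<bar>"
    by metis
  have N_pos: "0 < N (g n)" for n
  proof -
    have "N (g n) \<noteq> 0"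
    proof
      assume "N (g n) = 0"
      then have "\<phi> (g n) = 0"
        using N_eq_0_iff[OF g] linear_functional_on_AE_zero[OF lf g] by simp
      then show False
        using big[of n] \<open>N (g n) = 0\<close> by simp
    qed
    then show ?thesis
      using N_nonneg[OF g, of n] by simp
  qed
  define h where "h n = (\<lambda>x. inverse (N (g n)) * \<bar>g n x\<bar>)" for n
  have h: "h n \<in> X" for n
    unfolding h_def by (rule X_smult[OF X_abs[OF g]])
  have "N (h n) \<le> 1" for n
    unfolding h_def using N_smult[OF X_abs[OF g]] N_abs[OF g] N_pos[of n] by simp
  moreover have "0 \<le> h n x" for n x
    unfolding h_def using N_pos[of n] by simp
  ultimately obtain f where f: "f \<in> X" and bound: "\<And>k. AE x in M. (\<Sum>n<k. (1/2)^n * h n x) \<le> f x"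
    using half_power_series_bounded[of h, OF h] by blast
  have "real k \<le> \<phi> f" for k
  proof -
    have h_large: "2^n \<le> \<phi> (h n)" for n
    proof -
      have "\<phi> (h n) = \<phi> (\<lambda>x. \<bar>g n x\<bar>) / N (g n)"
        unfolding h_def using linear_functional_on_smult[OF lf X_abs[OF g]] by (simp add: divide_inverse mult.commute)
      also have "\<dots> \<ge> \<bar>\<phi> (g n)\<bar> / N (g n)"
        using positive_functional_abs_le[OF lf pos g] N_pos[of n] by (simp add: divide_right_mono)
      finally have "\<bar>\<phi> (g n)\<bar> / N (g n) \<le> \<phi> (h n)" .
      moreover have "4^n \<le> \<bar>\<phi> (g n)\<bar> / N (g n)"
        using big[of n] N_pos[of n] by (simp add: field_simps)
      moreover have "(2::real)^n \<le> 4^n"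
        by (simp add: power_mono)
      ultimately show ?thesis by linarith
    qed
    have "real k = (\<Sum>n<k. (1/2)^n * 2^n)"
      by (simp add: power_mult_distrib[symmetric])
    also have "\<dots> \<le> (\<Sum>n<k. (1/2)^n * \<phi> (h n))"
      using h_large by (intro sum_mono mult_left_mono) auto
    also have "\<dots> = \<phi> (\<lambda>x. \<Sum>n<k. (1/2)^n * h n x)"
      using linear_functional_on_sum[OF lf, of "{..<k}" "\<lambda>n x. (1/2)^n * h n x"]
        linear_functional_on_smult[OF lf h] X_smult[OF h] by simp
    also have "\<dots> \<le> \<phi> f"
      by (rule positive_functional_mono[OF lf pos X_sum f bound]) (auto intro: X_smult h)
    finally show ?thesis .
  qed
  then show False
    using reals_Archimedean2[of "\<phi> f"] by (meson not_le)
qed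

end

lemma linear_functional_on_suminf:
  assumes lf: "\<And>n. linear_functional_on M X (\<psi> n)"
    and summable: "\<And>g. g \<in> X \<Longrightarrow> summable (\<lambda>n. \<psi> n g)"
  shows "linear_functional_on M X (\<lambda>g. \<Sum>n. \<psi> n g)"
  unfolding linear_functional_on_def
proof (intro conjI ballI allI impI)
  fix f g
  assume "f \<in> X" "g \<in> X"
  then show "(\<Sum>n. \<psi> n (\<lambda>x. f x + g x)) = (\<Sum>n. \<psi> n f) + (\<Sum>n. \<psi> n g)"
    using linear_functional_on_add[OF lf] suminf_add[OF summable summable] by simp
next
  fix f c
  assume "f \<in> X"
  then show "(\<Sum>n. \<psi> n (\<lambda>x. c * f x)) = c * (\<Sum>n. \<psi> n f)"
    using linear_functional_on_smult[OF lf] suminf_mult[OF summable] by simp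
next
  fix f g
  assume "f \<in> X" "g \<in> X" "AE x in M. f x = g x"
  then show "(\<Sum>n. \<psi> n f) = (\<Sum>n. \<psi> n g)"
    using linear_functional_on_AE_cong[OF lf] by metis
qed

lemma suminf_half_powers_shift: "(\<Sum>n. (1/2::real)^(n + m) * Z) = 2 * (1/2)^m * Z"
proof -
  have "(\<lambda>n. (1/2::real)^(n + m) * Z) = (\<lambda>n. ((1/2)^m * Z) * (1/2)^n)"
    by (simp add: power_add algebra_simps)
  then show ?thesis
    using suminf_mult[OF summable_geometric[of "1/2::real"], of "(1/2)^m * Z"]
      suminf_geometric[of "1/2::real"] by simp
qed

context bfs
begin

context
  fixes \<psi> :: "nat \<Rightarrow> ('a \<Rightarrow> real) \<Rightarrow> real"
  assumes bound: "\<And>n g h. g \<in> X \<Longrightarrow> h \<in> X \<Longrightarrow> (AE x in M. \<bar>g x\<bar> \<le> h x) \<Longrightarrow> \<bar>\<psi> n g\<bar> \<le> (1/2)^n * N h"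
begin

lemma summable_half_bounded:
  assumes g: "g \<in> X"
  shows "summable (\<lambda>n. \<psi> n g)"
proof (rule summable_comparison_test')
  show "summable (\<lambda>n. (1/2::real)^n * N g)"
    by (rule summable_mult2) (simp add: summable_geometric)
  show "norm (\<psi> n g) \<le> (1/2)^n * N g" for n
    using bound[OF g X_abs[OF g]] N_abs[OF g] by simp
qed

lemma half_bounded_tail_le:
  assumes "g \<in> X" "h \<in> X" "AE x in M. \<bar>g x\<bar> \<le> h x"
  shows "\<bar>\<Sum>n. \<psi> (n + m) g\<bar> \<le> 2 * (1/2)^m * N h"
proof -
  have "\<bar>\<Sum>n. \<psi> (n + m) g\<bar> \<le> (\<Sum>n. (1/2::real)^(n + m) * N h)"
  proof (rule norm_suminf_le[where 'a = real, unfolded real_norm_def])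
    show "\<bar>\<psi> (n + m) g\<bar> \<le> (1/2)^(n + m) * N h" for n
      by (rule bound[OF assms])
    show "summable (\<lambda>n. (1/2::real)^(n + m) * N h)"
      by (intro summable_mult2 summable_ignore_initial_segment[OF summable_geometric, simplified]) simp
  qed
  then show ?thesis
    using suminf_half_powers_shift by simp
qed

text \<open>The finite head of the series is order continuous, and its tail is uniformly small on
  the order interval \<open>[-z, z]\<close> that eventually contains an order null net.\<close>

lemma order_continuous_suminf:
  assumes \<psi>: "\<And>n. \<psi> n \<in> order_cont_dual M X"
  shows "order_continuous M X (\<lambda>g. \<Sum>n. \<psi> n g)"
proof (rule order_continuousI)
  fix I :: "('a \<Rightarrow> real) set" and r x
  assume dir: "directed_set I r" and null: "order_null M X I r x"
  have x: "\<And>a. a \<in> I \<Longrightarrow> x a \<in> X"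
    using null unfolding order_null_def by blast
  obtain J :: "('a \<Rightarrow> real) set" and s z where dz: "decreasing_to_zero M X J s z"
    and dominated: "\<forall>b\<in>J. net_eventually I r (\<lambda>a. ae_le M (\<lambda>\<omega>. \<bar>x a \<omega>\<bar>) (z b))"
    using null unfolding order_null_def by blast
  obtain b where "b \<in> J"
    using dz unfolding decreasing_to_zero_def directed_set_def by blast
  then have z: "z b \<in> X" and dominated_b: "net_eventually I r (\<lambda>a. ae_le M (\<lambda>\<omega>. \<bar>x a \<omega>\<bar>) (z b))"
    using dz dominated unfolding decreasing_to_zero_def by blast+
  show "net_tendsto I r (\<lambda>a. \<Sum>n. \<psi> n (x a)) 0"
    unfolding net_tendsto_def
  proof (intro allI impI)
    fix e :: real
    assume e: "e > 0"
    obtain m where m: "(1/2::real)^m < e / (4 * (N (z b) + 1))"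
      using real_arch_pow_inv[of "e / (4 * (N (z b) + 1))" "1/2"] e N_nonneg[OF z] by auto
    have tail_small: "2 * (1/2::real)^m * N (z b) < e / 2"
    proof -
      have "2 * (1/2::real)^m * N (z b) \<le> 2 * (1/2)^m * (N (z b) + 1)"
        by simp
      also have "\<dots> < 2 * (e / (4 * (N (z b) + 1))) * (N (z b) + 1)"
        using m N_nonneg[OF z] by (intro mult_strict_right_mono mult_strict_left_mono) auto
      also have "\<dots> = e / 2"
        using N_nonneg[OF z] by (simp add: field_simps)
      finally show ?thesis .
    qed
    have "net_tendsto I r (\<lambda>a. \<Sum>i<m. \<psi> i (x a)) 0"
      using net_tendsto_sum[OF dir, of "{..<m}"]
        order_continuousD[OF order_cont_dualD(2)[OF \<psi>] dir null] by simp
    then have "net_eventually I r (\<lambda>a. \<bar>(\<Sum>i<m. \<psi> i (x a)) - 0\<bar> < e/2)"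
      using e unfolding net_tendsto_def by (meson half_gt_zero)
    then have "net_eventually I r
        (\<lambda>a. \<bar>(\<Sum>i<m. \<psi> i (x a)) - 0\<bar> < e/2 \<and> ae_le M (\<lambda>\<omega>. \<bar>x a \<omega>\<bar>) (z b))"
      by (rule net_eventually_conj[OF dir _ dominated_b])
    then show "net_eventually I r (\<lambda>a. \<bar>(\<Sum>n. \<psi> n (x a)) - 0\<bar> < e)"
    proof (rule net_eventually_mono)
      fix a
      assume a: "a \<in> I"
        and head: "\<bar>(\<Sum>i<m. \<psi> i (x a)) - 0\<bar> < e/2 \<and> ae_le M (\<lambda>\<omega>. \<bar>x a \<omega>\<bar>) (z b)"
      have "(\<Sum>n. \<psi> n (x a)) = (\<Sum>n. \<psi> (n + m) (x a)) + (\<Sum>i<m. \<psi> i (x a))"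
        by (rule suminf_split_initial_segment[OF summable_half_bounded[OF x[OF a]]])
      moreover have "\<bar>\<Sum>n. \<psi> (n + m) (x a)\<bar> \<le> 2 * (1/2)^m * N (z b)"
        using head by (intro half_bounded_tail_le x a z) (simp add: ae_le_def)
      ultimately show "\<bar>(\<Sum>n. \<psi> n (x a)) - 0\<bar> < e"
        using head tail_small by linarith
    qed
  qed
qed

lemma order_cont_dual_suminf:
  assumes "\<And>n. \<psi> n \<in> order_cont_dual M X"
  shows "(\<lambda>g. \<Sum>n. \<psi> n g) \<in> order_cont_dual M X"
  using linear_functional_on_suminf[OF order_cont_dualD(1)[OF assms] summable_half_bounded]
    order_continuous_suminf[OF assms] unfolding order_cont_dual_def by blast

end

lemma positive_functional_series:
  fixes \<psi> :: "nat \<Rightarrow> ('a \<Rightarrow> real) \<Rightarrow> real"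
  assumes \<psi>: "\<And>n. \<psi> n \<in> order_cont_dual M X" "\<And>n. positive_functional (\<psi> n)"
  shows "\<exists>\<Phi>\<in>order_cont_dual M X. positive_functional \<Phi> \<and>
     (\<forall>n. \<exists>c>0. \<forall>g\<in>X. (AE x in M. 0 \<le> g x) \<longrightarrow> c * \<psi> n g \<le> \<Phi> g) \<and>
     (\<forall>g\<in>X. (\<forall>n. \<psi> n g \<le> 0) \<longrightarrow> \<Phi> g \<le> 0)"
proof -
  note lf = order_cont_dualD(1)[OF \<psi>(1)]
  obtain K where K: "\<And>n. 0 \<le> K n" "\<And>n g. g \<in> X \<Longrightarrow> \<bar>\<psi> n g\<bar> \<le> K n * N g"
    using positive_functional_bounded[OF lf \<psi>(2)] by metis
  define c where "c n = (1/2::real)^n / (1 + K n)" for n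
  have c_pos: "0 < c n" for n
    unfolding c_def using K(1)[of n] by simp
  have cK: "c n * K n \<le> (1/2)^n" for n
  proof -
    have "c n * K n = (1/2)^n * (K n / (1 + K n))"
      unfolding c_def by simp
    also have "\<dots> \<le> (1/2)^n * 1"
      using K(1)[of n] by (intro mult_left_mono) auto
    finally show ?thesis
      by simp
  qed
  have bound: "\<bar>c n * \<psi> n g\<bar> \<le> (1/2)^n * N h"
    if g: "g \<in> X" and h: "h \<in> X" and "AE x in M. \<bar>g x\<bar> \<le> h x" for n g h
  proof -
    have "\<bar>\<psi> n g\<bar> \<le> \<psi> n (\<lambda>x. \<bar>g x\<bar>)"
      by (rule positive_functional_abs_le[OF lf \<psi>(2) g])
    also have "\<dots> \<le> \<psi> n h"
      by (rule positive_functional_mono[OF lf \<psi>(2) X_abs[OF g] h]) fact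
    also have "\<dots> \<le> K n * N h"
      using K(2)[OF h, of n] by simp
    finally have "c n * \<bar>\<psi> n g\<bar> \<le> (c n * K n) * N h"
      using c_pos[of n] by (simp add: mult_left_mono)
    also have "\<dots> \<le> (1/2)^n * N h"
      using cK[of n] N_nonneg[OF h] by (simp add: mult_right_mono)
    finally show ?thesis
      using c_pos[of n] by (simp add: abs_mult)
  qed
  define \<Phi> where "\<Phi> g = (\<Sum>n. c n * \<psi> n g)" for g
  have \<Phi>: "\<Phi> \<in> order_cont_dual M X"
    unfolding \<Phi>_def by (rule order_cont_dual_suminf[OF bound order_cont_dual_cmult[OF \<psi>(1)]])
  have summable: "summable (\<lambda>n. c n * \<psi> n g)" if "g \<in> X" for g
    using summable_half_bounded[where \<psi> = "\<lambda>n g. c n * \<psi> n g", OF bound that] .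
  have nonneg: "0 \<le> c n * \<psi> n g" if "g \<in> X" "AE x in M. 0 \<le> g x" for n g
    using c_pos[of n] positive_functionalD[OF \<psi>(2) that] by simp
  have "positive_functional \<Phi>"
    unfolding positive_functional_def \<Phi>_def using summable nonneg by (auto intro: suminf_nonneg)
  moreover have "c n * \<psi> n g \<le> \<Phi> g" if "g \<in> X" "AE x in M. 0 \<le> g x" for n g
    using sum_le_suminf[OF summable[OF that(1)], of "{n}"] nonneg[OF that] by (simp add: \<Phi>_def)
  moreover have "\<Phi> g \<le> 0" if "g \<in> X" "\<forall>n. \<psi> n g \<le> 0" for g
    using suminf_le[OF _ summable[OF that(1)] summable_zero] that c_pos
    by (simp add: \<Phi>_def mult_nonneg_nonpos less_imp_le)
  ultimately show ?thesis
    using \<Phi> c_pos by blast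
qed

end

lemma continuous_on_affine_fun:
  "continuous_on S (\<lambda>(y :: 'i \<Rightarrow> real) i. s * y i + k i)"
  by (intro continuous_on_coordinatewise_then_product continuous_intros)
    (rule continuous_on_subset[OF continuous_on_product_coordinates], simp)

lemma closure_invariant_image:
  fixes h :: "('i \<Rightarrow> real) \<Rightarrow> 'i \<Rightarrow> real"
  assumes "continuous_on (closure K) h" "\<And>y. y \<in> K \<Longrightarrow> h y \<in> closure K" "y \<in> closure K"
  shows "h y \<in> closure K"
  using image_closure_subset[OF assms(1) closed_closure] assms(2,3) by blast

lemma
  fixes K :: "('i \<Rightarrow> real) set"
  assumes add: "\<And>y k. y \<in> K \<Longrightarrow> k \<in> K \<Longrightarrow> (\<lambda>i. y i + k i) \<in> K"
    and scale: "\<And>y s. y \<in> K \<Longrightarrow> 0 \<le> s \<Longrightarrow> (\<lambda>i. s * y i) \<in> K"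
  shows closure_cone_add: "y \<in> closure K \<Longrightarrow> k \<in> closure K \<Longrightarrow> (\<lambda>i. y i + k i) \<in> closure K"
    and closure_cone_scale: "y \<in> closure K \<Longrightarrow> 0 \<le> s \<Longrightarrow> (\<lambda>i. s * y i) \<in> closure K"
proof -
  have K_closure: "K \<subseteq> closure K"
    by (rule closure_subset)
  have add_closure: "(\<lambda>i. y i + k i) \<in> closure K" if "y \<in> K" "k \<in> closure K" for y k
    using closure_invariant_image[OF continuous_on_affine_fun[of _ 1 y] _ that(2)]
      add[OF that(1)] K_closure by (auto simp: add.commute)
  show "y \<in> closure K \<Longrightarrow> k \<in> closure K \<Longrightarrow> (\<lambda>i. y i + k i) \<in> closure K"
    using closure_invariant_image[of K "\<lambda>y i. 1 * y i + k i" y, OF continuous_on_affine_fun]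
      add_closure by simp
  show "y \<in> closure K \<Longrightarrow> 0 \<le> s \<Longrightarrow> (\<lambda>i. s * y i) \<in> closure K"
    using closure_invariant_image[of K "\<lambda>y i. s * y i + 0" y, OF continuous_on_affine_fun]
      scale K_closure by auto
qed

lemma sum_square_dist_nearest_point_exists:
  fixes S :: "('i \<Rightarrow> real) set" and b :: "'i \<Rightarrow> real"
  assumes P: "finite P" and S: "closed S" "y1 \<in> S" "S \<subseteq> {y. \<forall>i. i \<notin> P \<longrightarrow> y i = 0}"
  shows "\<exists>y0\<in>S. \<forall>y\<in>S. (\<Sum>i\<in>P. (b i - y0 i)^2) \<le> (\<Sum>i\<in>P. (b i - y i)^2)"
proof -
  define D where "D y = (\<Sum>i\<in>P. (b i - y i)^2)" for y :: "'i \<Rightarrow> real"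
  have D_ge: "(b i - y i)^2 \<le> D y" if "i \<in> P" for i y
    unfolding D_def by (rule member_le_sum[OF that]) (use P in auto)
  define R where "R = D y1 + 1"
  have R: "1 \<le> R"
    unfolding R_def D_def by (simp add: sum_nonneg)
  text \<open>Far from \<open>b\<close> no point can beat \<open>y1\<close>, so minimise over the compact box of radius \<open>R\<close>.\<close>
  define B where "B = PiE UNIV (\<lambda>i. if i \<in> P then {b i - R .. b i + R} else {0::real})"
  have B_iff: "y \<in> B \<longleftrightarrow> (\<forall>i. y i \<in> (if i \<in> P then {b i - R .. b i + R} else {0}))" for y
    unfolding B_def PiE_UNIV_domain Pi_iff by simp
  have "compactin (product_topology (\<lambda>_. euclideanreal) UNIV) B"
    unfolding B_def compactin_PiE by auto
  then have "compact (B \<inter> S)"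
    unfolding euclidean_product_topology by (intro compact_Int_closed S) simp
  have abs_le: "\<bar>x\<bar> \<le> x^2 + 1" for x :: real
  proof -
    have "0 \<le> (\<bar>x\<bar> - 1)^2"
      by simp
    then show ?thesis
      by (simp add: power2_diff power2_abs)
  qed
  have "y1 \<in> B"
    unfolding B_iff
  proof
    fix i
    show "y1 i \<in> (if i \<in> P then {b i - R .. b i + R} else {0})"
    proof (cases "i \<in> P")
      case True
      then have "\<bar>b i - y1 i\<bar> \<le> R"
        using abs_le[of "b i - y1 i"] D_ge[OF True, of y1] unfolding R_def by linarith
      then show ?thesis
        using True by (auto simp: abs_le_iff)
    qed (use S(2,3) in auto)
  qed
  have "continuous_on (B \<inter> S) D"
    unfolding D_def
    by (intro continuous_intros) (rule continuous_on_subset[OF continuous_on_product_coordinates], simp)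
  then obtain y0 where y0: "y0 \<in> B \<inter> S" and min: "\<And>y. y \<in> B \<inter> S \<Longrightarrow> D y0 \<le> D y"
    using continuous_attains_inf[OF \<open>compact (B \<inter> S)\<close>] \<open>y1 \<in> B\<close> S(2) by blast
  have "D y0 \<le> D y" if y: "y \<in> S" for y
  proof (cases "y \<in> B")
    case False
    then obtain i where i: "y i \<notin> (if i \<in> P then {b i - R .. b i + R} else {0})"
      unfolding B_iff by blast
    have "i \<in> P"
      using i y S(3) by (cases "i \<in> P") auto
    with i have "R < \<bar>b i - y i\<bar>"
      by (auto simp: abs_le_iff)
    then have "R * R < (b i - y i)^2"
      using R mult_strict_mono[of R "\<bar>b i - y i\<bar>" R "\<bar>b i - y i\<bar>"] by (simp add: power2_eq_square)
    moreover have "R \<le> R * R"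
      using R mult_right_mono[of 1 R R] by simp
    ultimately have "R < D y"
      using D_ge[OF \<open>i \<in> P\<close>, of y] by linarith
    moreover have "D y0 \<le> D y1"
      using min \<open>y1 \<in> B\<close> S(2) by blast
    ultimately show ?thesis
      unfolding R_def by linarith
  qed (use min y in blast)
  then show ?thesis
    using y0 unfolding D_def by blast
qed

lemma sum_mult_nonpos_if_sum_square_minimal:
  fixes a v :: "'i \<Rightarrow> real"
  assumes P: "finite P"
    and minimal: "\<And>t. 0 < t \<Longrightarrow> t \<le> 1 \<Longrightarrow> (\<Sum>i\<in>P. (a i)^2) \<le> (\<Sum>i\<in>P. (a i - t * v i)^2)"
  shows "(\<Sum>i\<in>P. a i * v i) \<le> 0"
proof (rule ccontr)
  define A where "A = (\<Sum>i\<in>P. a i * v i)"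
  define V where "V = (\<Sum>i\<in>P. (v i)^2)"
  assume "\<not> ?thesis"
  then have A: "0 < A"
    unfolding A_def by simp
  have V: "0 \<le> V"
    unfolding V_def by (intro sum_nonneg) simp
  have expand: "(\<Sum>i\<in>P. (a i - t * v i)^2) = (\<Sum>i\<in>P. (a i)^2) - 2 * t * A + t^2 * V" for t
    unfolding A_def V_def
    by (simp add: power2_diff sum.distrib sum_subtractf sum_distrib_left power_mult_distrib algebra_simps)
  define t where "t = A / (A + V)"
  have t: "0 < t" "t \<le> 1"
    unfolding t_def using A V by (auto simp: field_simps)
  have "2 * t * A \<le> t^2 * V"
    using minimal[OF t] expand[of t] by linarith
  then have "2 * A \<le> t * V"
    using t by (simp add: power2_eq_square algebra_simps)
  moreover have "t * V \<le> A"
  proof -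
    have "t * V = A * (V / (A + V))"
      unfolding t_def by simp
    also have "\<dots> \<le> A * 1"
      using A V by (intro mult_left_mono) (auto simp: field_simps)
    finally show ?thesis
      by simp
  qed
  ultimately show False
    using A by linarith
qed

text \<open>The separating vector is \<open>b - y0\<close> for the point \<open>y0\<close> of the cone nearest to \<open>b\<close>.\<close>

lemma closed_cone_separation:
  fixes K :: "('i \<Rightarrow> real) set" and b :: "'i \<Rightarrow> real"
  assumes P: "finite P" and K: "closed K" "(\<lambda>i. 0) \<in> K" "K \<subseteq> {y. \<forall>i. i \<notin> P \<longrightarrow> y i = 0}"
    and add: "\<And>y k. y \<in> K \<Longrightarrow> k \<in> K \<Longrightarrow> (\<lambda>i. y i + k i) \<in> K"
    and scale: "\<And>y s. y \<in> K \<Longrightarrow> 0 \<le> s \<Longrightarrow> (\<lambda>i. s * y i) \<in> K"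
    and b: "\<And>i. i \<notin> P \<Longrightarrow> b i = 0" "b \<notin> K"
  shows "\<exists>a. (\<forall>k\<in>K. (\<Sum>i\<in>P. a i * k i) \<le> 0) \<and> 0 < (\<Sum>i\<in>P. a i * b i)"
proof -
  obtain y0 where y0: "y0 \<in> K" and min: "\<And>y. y \<in> K \<Longrightarrow> (\<Sum>i\<in>P. (b i - y0 i)^2) \<le> (\<Sum>i\<in>P. (b i - y i)^2)"
    using sum_square_dist_nearest_point_exists[OF P K(1,2,3), of b] by blast
  define a where "a i = b i - y0 i" for i
  have inner_nonpos: "(\<Sum>i\<in>P. a i * v i) \<le> 0" if "\<And>t. 0 < t \<Longrightarrow> t \<le> 1 \<Longrightarrow> (\<lambda>i. y0 i + t * v i) \<in> K" for v
  proof (rule sum_mult_nonpos_if_sum_square_minimal[OF P])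
    fix t :: real
    assume "0 < t" "t \<le> 1"
    then show "(\<Sum>i\<in>P. (a i)^2) \<le> (\<Sum>i\<in>P. (a i - t * v i)^2)"
      using min[OF that] unfolding a_def by (simp add: algebra_simps)
  qed
  have "(\<Sum>i\<in>P. a i * k i) \<le> 0" if "k \<in> K" for k
    using that by (intro inner_nonpos add y0 scale) auto
  moreover have "(\<Sum>i\<in>P. a i * y0 i) = 0"
  proof -
    have "(\<Sum>i\<in>P. a i * y0 i) \<le> 0"
      using scale[OF y0, of "1 + t" for t] by (intro inner_nonpos) (simp add: algebra_simps)
    moreover have "(\<Sum>i\<in>P. a i * (- y0 i)) \<le> 0"
      using scale[OF y0, of "1 - t" for t] by (intro inner_nonpos) (simp add: algebra_simps)
    ultimately show ?thesis
      by (simp add: sum_negf)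
  qed
  moreover have "0 < (\<Sum>i\<in>P. (a i)^2)"
  proof (rule ccontr)
    assume "\<not> ?thesis"
    then have "(\<Sum>i\<in>P. (a i)^2) = 0"
      using sum_nonneg[of P "\<lambda>i. (a i)^2"] by simp
    then have "\<forall>i\<in>P. a i = 0"
      using sum_nonneg_eq_0_iff[OF P, of "\<lambda>i. (a i)^2"] by simp
    then have "b = y0"
      using b(1) y0 K(3) by (force simp: a_def fun_eq_iff)
    then show False
      using b(2) y0 by simp
  qed
  moreover have "(\<Sum>i\<in>P. a i * b i) = (\<Sum>i\<in>P. (a i)^2) + (\<Sum>i\<in>P. a i * y0 i)"
  proof -
    have "a i * b i = (a i)^2 + a i * y0 i" for i
      by (simp add: a_def power2_eq_square algebra_simps)
    then show ?thesis
      by (simp add: sum.distrib)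
  qed
  ultimately show ?thesis
    by (intro exI[of _ a]) auto
qed

definition weak_ball :: "('a \<Rightarrow> real) set \<Rightarrow> (('a \<Rightarrow> real) \<Rightarrow> real) set \<Rightarrow> real \<Rightarrow> ('a \<Rightarrow> real) \<Rightarrow> ('a \<Rightarrow> real) set"
  where "weak_ball X P e f = {g\<in>X. \<forall>\<phi>\<in>P. \<bar>\<phi> g - \<phi> f\<bar> < e}"

lemma generate_topology_on_weak_ball:
  assumes "generate_topology_on S U"
    and basis: "\<And>s f. s \<in> S \<Longrightarrow> f \<in> s \<Longrightarrow> \<exists>P e. finite P \<and> P \<subseteq> D \<and> 0 < e \<and> weak_ball X P e f \<subseteq> s"
  shows "\<forall>f\<in>U. \<exists>P e. finite P \<and> P \<subseteq> D \<and> 0 < e \<and> weak_ball X P e f \<subseteq> U"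
  using assms(1)
proof (induct rule: generate_topology_on.induct)
  case Empty
  then show ?case by simp
next
  case (Int U V)
  show ?case
  proof
    fix f
    assume "f \<in> U \<inter> V"
    then have "f \<in> U" "f \<in> V"
      by auto
    obtain P1 e1 where 1: "finite P1" "P1 \<subseteq> D" "0 < e1" "weak_ball X P1 e1 f \<subseteq> U"
      using Int(2) \<open>f \<in> U\<close> by meson
    obtain P2 e2 where 2: "finite P2" "P2 \<subseteq> D" "0 < e2" "weak_ball X P2 e2 f \<subseteq> V"
      using Int(4) \<open>f \<in> V\<close> by meson
    have "weak_ball X (P1 \<union> P2) (min e1 e2) f \<subseteq> weak_ball X P1 e1 f \<inter> weak_ball X P2 e2 f"
      unfolding weak_ball_def by auto
    then have "weak_ball X (P1 \<union> P2) (min e1 e2) f \<subseteq> U \<inter> V"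
      using 1(4) 2(4) by blast
    moreover have "finite (P1 \<union> P2)" "P1 \<union> P2 \<subseteq> D" "0 < min e1 e2"
      using 1 2 by auto
    ultimately show "\<exists>P e. finite P \<and> P \<subseteq> D \<and> 0 < e \<and> weak_ball X P e f \<subseteq> U \<inter> V"
      by meson
  qed
next
  case (UN K)
  show ?case
  proof
    fix f
    assume "f \<in> \<Union>K"
    then obtain k where k: "k \<in> K" "f \<in> k"
      by blast
    then obtain P e where "finite P" "P \<subseteq> D" "0 < e" "weak_ball X P e f \<subseteq> k"
      using UN(2) by meson
    moreover have "k \<subseteq> \<Union>K"
      using k by blast
    ultimately show "\<exists>P e. finite P \<and> P \<subseteq> D \<and> 0 < e \<and> weak_ball X P e f \<subseteq> \<Union>K"
      by (meson order_trans)
  qed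
next
  case (Basis s)
  then show ?case
    using basis by meson
qed

definition evaluation :: "(('a \<Rightarrow> real) \<Rightarrow> real) set \<Rightarrow> ('a \<Rightarrow> real) \<Rightarrow> (('a \<Rightarrow> real) \<Rightarrow> real) \<Rightarrow> real"
  where "evaluation P g = (\<lambda>\<phi>. if \<phi> \<in> P then \<phi> g else 0)"

lemma
  assumes lf: "\<And>\<phi>. \<phi> \<in> P \<Longrightarrow> linear_functional_on M X \<phi>" and C: "C \<subseteq> X"
  shows evaluation_image_add:
      "(\<And>f g. f \<in> C \<Longrightarrow> g \<in> C \<Longrightarrow> (\<lambda>x. f x + g x) \<in> C) \<Longrightarrow>
       y \<in> evaluation P ` C \<Longrightarrow> k \<in> evaluation P ` C \<Longrightarrow> (\<lambda>\<phi>. y \<phi> + k \<phi>) \<in> evaluation P ` C"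
    and evaluation_image_scale:
      "(\<And>f c. f \<in> C \<Longrightarrow> 0 \<le> c \<Longrightarrow> (\<lambda>x. c * f x) \<in> C) \<Longrightarrow>
       y \<in> evaluation P ` C \<Longrightarrow> 0 \<le> s \<Longrightarrow> (\<lambda>\<phi>. s * y \<phi>) \<in> evaluation P ` C"
proof -
  assume add: "\<And>f g. f \<in> C \<Longrightarrow> g \<in> C \<Longrightarrow> (\<lambda>x. f x + g x) \<in> C"
    and "y \<in> evaluation P ` C" "k \<in> evaluation P ` C"
  then obtain f g where fg: "f \<in> C" "g \<in> C" "y = evaluation P f" "k = evaluation P g"
    by blast
  then have "(\<lambda>\<phi>. y \<phi> + k \<phi>) = evaluation P (\<lambda>x. f x + g x)"
    using C linear_functional_on_add[OF lf] by (auto simp: evaluation_def fun_eq_iff subset_iff)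
  then show "(\<lambda>\<phi>. y \<phi> + k \<phi>) \<in> evaluation P ` C"
    using add[OF fg(1,2)] by simp
next
  assume scale: "\<And>f c. f \<in> C \<Longrightarrow> 0 \<le> c \<Longrightarrow> (\<lambda>x. c * f x) \<in> C"
    and "y \<in> evaluation P ` C" "0 \<le> s"
  then obtain f where f: "f \<in> C" "y = evaluation P f"
    by blast
  then have "(\<lambda>\<phi>. s * y \<phi>) = evaluation P (\<lambda>x. s * f x)"
    using C linear_functional_on_smult[OF lf] by (auto simp: evaluation_def fun_eq_iff subset_iff)
  then show "(\<lambda>\<phi>. s * y \<phi>) \<in> evaluation P ` C"
    using scale[OF f(1) \<open>0 \<le> s\<close>] by simp
qed

lemma closure_evaluation_image_subset:
  fixes P :: "(('a \<Rightarrow> real) \<Rightarrow> real) set"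
  shows "closure (evaluation P ` C) \<subseteq> {y. \<forall>\<phi>. \<phi> \<notin> P \<longrightarrow> y \<phi> = 0}"
proof (rule closure_minimal)
  show "closed {y :: (('a \<Rightarrow> real) \<Rightarrow> real) \<Rightarrow> real. \<forall>\<phi>. \<phi> \<notin> P \<longrightarrow> y \<phi> = 0}"
  proof (rule closed_Collect_all)
    fix \<phi>
    have "closed {y :: (('a \<Rightarrow> real) \<Rightarrow> real) \<Rightarrow> real. y \<phi> = 0}"
      by (rule closed_Collect_eq) (auto intro: continuous_on_product_coordinates)
    then show "closed {y :: (('a \<Rightarrow> real) \<Rightarrow> real) \<Rightarrow> real. \<phi> \<notin> P \<longrightarrow> y \<phi> = 0}"
      by (cases "\<phi> \<in> P") simp_all
  qed
qed (auto simp: evaluation_def)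

lemma evaluation_notin_closure:
  assumes P: "finite P" and e: "0 < e" and C: "C \<subseteq> X" and disjoint: "weak_ball X P e f \<subseteq> X - C"
  shows "evaluation P f \<notin> closure (evaluation P ` C)"
proof
  define U where "U = {y. \<forall>\<phi>\<in>P. y \<phi> \<in> ball (evaluation P f \<phi>) e}"
  have "open U"
    unfolding U_def
    using product_topology_basis'[where I = P and x = "\<lambda>\<phi>. \<phi>" and U = "\<lambda>\<phi>. ball (evaluation P f \<phi>) e"] P
    by simp
  moreover have "U \<inter> evaluation P ` C = {}"
  proof (rule ccontr)
    assume "U \<inter> evaluation P ` C \<noteq> {}"
    then obtain c where c: "c \<in> C" "evaluation P c \<in> U"
      by blast
    then have "\<forall>\<phi>\<in>P. \<bar>\<phi> c - \<phi> f\<bar> < e"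
      by (auto simp: U_def evaluation_def dist_real_def abs_minus_commute)
    then have "c \<in> weak_ball X P e f"
      using C c(1) unfolding weak_ball_def by blast
    then show False
      using disjoint c(1) by blast
  qed
  moreover assume "evaluation P f \<in> closure (evaluation P ` C)"
  moreover have "evaluation P f \<in> U"
    unfolding U_def using e by simp
  ultimately show False
    using open_Int_closure_eq_empty[of U "evaluation P ` C"] by blast
qed

context bfs
begin

lemma topspace_weak_topology: "topspace (weak_topology M X) = X"
proof -
  let ?S = "{{f \<in> X. \<phi> f \<in> U} | \<phi> U. \<phi> \<in> order_cont_dual M X \<and> open U}"
  have "X \<in> ?S"
    using order_cont_dual_zero by (intro CollectI exI[of _ "\<lambda>g. 0"] exI[of _ UNIV]) simp
  moreover have "\<And>s. s \<in> ?S \<Longrightarrow> s \<subseteq> X"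
    by blast
  ultimately have "\<Union>?S = X"
    by blast
  then show ?thesis
    unfolding weak_topology_def topology_generated_by_topspace .
qed

lemma openin_weak_topology_weak_ball:
  assumes "openin (weak_topology M X) U" "f \<in> U"
  shows "\<exists>P e. finite P \<and> P \<subseteq> order_cont_dual M X \<and> 0 < e \<and> weak_ball X P e f \<subseteq> U"
proof -
  let ?S = "{{f \<in> X. \<phi> f \<in> U} | \<phi> U. \<phi> \<in> order_cont_dual M X \<and> open U}"
  have generated: "generate_topology_on ?S U"
    using assms(1) unfolding weak_topology_def by (rule openin_topology_generated_by)
  have basis: "\<exists>P e. finite P \<and> P \<subseteq> order_cont_dual M X \<and> 0 < e \<and> weak_ball X P e f \<subseteq> s"
    if "s \<in> ?S" "f \<in> s" for s f
  proof -
    obtain \<phi> V where s: "s = {f \<in> X. \<phi> f \<in> V}" "\<phi> \<in> order_cont_dual M X" "open V"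
      using \<open>s \<in> ?S\<close> by blast
    then obtain e where e: "0 < e" "ball (\<phi> f) e \<subseteq> V"
      using \<open>f \<in> s\<close> open_contains_ball by blast
    have "weak_ball X {\<phi>} e f \<subseteq> s"
    proof
      fix g
      assume "g \<in> weak_ball X {\<phi>} e f"
      then have "g \<in> X" "dist (\<phi> f) (\<phi> g) < e"
        by (auto simp: weak_ball_def dist_real_def abs_minus_commute)
      then show "g \<in> s"
        using e(2) unfolding s(1) by auto
    qed
    moreover have "finite {\<phi>}" "{\<phi>} \<subseteq> order_cont_dual M X"
      using s(2) by auto
    ultimately show ?thesis
      using e(1) by meson
  qed
  show ?thesis
    using generate_topology_on_weak_ball[OF generated basis] assms(2) by blast
qed

text \<open>A weakly closed cone is cut out by finitely many functionals near \<open>f\<close>; evaluating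
  them maps \<open>C\<close> into a cone in a finite-dimensional space that avoids a neighbourhood of the
  image of \<open>f\<close>, and a separating vector there gives the separating functional.\<close>

lemma weakly_closed_cone_separation:
  assumes closed: "closedin (weak_topology M X) C"
    and add: "\<And>f g. f \<in> C \<Longrightarrow> g \<in> C \<Longrightarrow> (\<lambda>x. f x + g x) \<in> C"
    and scale: "\<And>f c. f \<in> C \<Longrightarrow> 0 \<le> c \<Longrightarrow> (\<lambda>x. c * f x) \<in> C"
    and zero: "(\<lambda>x. 0) \<in> C"
    and f: "f \<in> X" "f \<notin> C"
  shows "\<exists>\<psi>\<in>order_cont_dual M X. (\<forall>c\<in>C. \<psi> c \<le> 0) \<and> 0 < \<psi> f"
proof -
  have CX: "C \<subseteq> X"
    using closedin_subset[OF closed] topspace_weak_topology by simp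
  have "openin (weak_topology M X) (X - C)"
    using closed topspace_weak_topology unfolding closedin_def by simp
  then obtain P e where P: "finite P" "P \<subseteq> order_cont_dual M X" and e: "0 < e"
    and ball: "weak_ball X P e f \<subseteq> X - C"
    using openin_weak_topology_weak_ball[of "X - C" f] f by blast
  have lf: "\<And>\<phi>. \<phi> \<in> P \<Longrightarrow> linear_functional_on M X \<phi>"
    using P(2) order_cont_dualD(1) by blast
  define K where "K = closure (evaluation P ` C)"
  have "evaluation P (\<lambda>x. 0) = (\<lambda>\<phi>. 0)"
    using linear_functional_on_zero[OF lf] by (auto simp: evaluation_def)
  then have K_zero: "(\<lambda>\<phi>. 0) \<in> K"
    unfolding K_def using zero closure_subset[of "evaluation P ` C"] by (metis image_eqI subsetD)
  have K_closed: "closed K"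
    unfolding K_def by simp
  note cone = evaluation_image_add[OF lf CX add] evaluation_image_scale[OF lf CX scale]
  have K_add: "\<And>y k. y \<in> K \<Longrightarrow> k \<in> K \<Longrightarrow> (\<lambda>i. y i + k i) \<in> K"
    unfolding K_def by (rule closure_cone_add[OF cone])
  have K_scale: "\<And>y s. y \<in> K \<Longrightarrow> 0 \<le> s \<Longrightarrow> (\<lambda>i. s * y i) \<in> K"
    unfolding K_def by (rule closure_cone_scale[OF cone])
  have f_supp: "\<And>\<phi>. \<phi> \<notin> P \<Longrightarrow> evaluation P f \<phi> = 0"
    by (simp add: evaluation_def)
  have K_supp: "K \<subseteq> {y. \<forall>\<phi>. \<phi> \<notin> P \<longrightarrow> y \<phi> = 0}"
    unfolding K_def by (rule closure_evaluation_image_subset)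
  have f_notin: "evaluation P f \<notin> K"
    unfolding K_def by (rule evaluation_notin_closure[OF P(1) e CX ball])
  obtain a where a: "\<forall>k\<in>K. (\<Sum>\<phi>\<in>P. a \<phi> * k \<phi>) \<le> 0"
    "0 < (\<Sum>\<phi>\<in>P. a \<phi> * evaluation P f \<phi>)"
    using closed_cone_separation[where b = "evaluation P f",
        OF P(1) K_closed K_zero K_supp K_add K_scale f_supp f_notin] by blast
  define \<psi> where "\<psi> g = (\<Sum>\<phi>\<in>P. a \<phi> * \<phi> g)" for g
  have \<psi>_eq: "\<psi> g = (\<Sum>\<phi>\<in>P. a \<phi> * evaluation P g \<phi>)" for g
    unfolding \<psi>_def evaluation_def by (rule sum.cong) auto
  have "\<psi> \<in> order_cont_dual M X"
    unfolding \<psi>_def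
  proof (rule order_cont_dual_sum[OF P(1)])
    show "(\<lambda>g. a \<phi> * \<phi> g) \<in> order_cont_dual M X" if "\<phi> \<in> P" for \<phi>
      using P(2) that by (intro order_cont_dual_cmult) blast
  qed
  moreover have "\<psi> c \<le> 0" if "c \<in> C" for c
  proof -
    have "evaluation P c \<in> K"
      unfolding K_def using closure_subset[of "evaluation P ` C"] that by auto
    then show ?thesis
      unfolding \<psi>_eq using a(1) by blast
  qed
  moreover have "0 < \<psi> f"
    unfolding \<psi>_eq by (rule a(2))
  ultimately show ?thesis
    by blast
qed

end

context bfs
begin

lemma order_continuous_tendsto_eventually_eq:
  assumes lf: "linear_functional_on M X \<psi>" and oc: "order_continuous M X \<psi>"
    and g: "g \<in> X" and u: "\<And>n. u n \<in> X"
    and mono: "AE \<omega> in M. \<forall>m n. m \<le> n \<longrightarrow> \<bar>g \<omega> - u n \<omega>\<bar> \<le> \<bar>g \<omega> - u m \<omega>\<bar>"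
    and eventually_eq: "AE \<omega> in M. \<exists>n. u n \<omega> = g \<omega>"
  shows "(\<lambda>n. \<psi> (u n)) \<longlonglongrightarrow> \<psi> g"
proof -
  have "(\<lambda>n. \<psi> (\<lambda>x. g x - u n x)) \<longlonglongrightarrow> 0"
  proof (rule order_continuous_tendsto_seq[OF oc, where z = "\<lambda>n \<omega>. \<bar>g \<omega> - u n \<omega>\<bar>"])
    show "AE \<omega> in M. \<exists>n. \<bar>g \<omega> - u n \<omega>\<bar> = 0"
      using eventually_eq by eventually_elim (metis abs_zero diff_self)
    show "(\<lambda>x. g x - u n x) \<in> X" "(\<lambda>\<omega>. \<bar>g \<omega> - u n \<omega>\<bar>) \<in> X" for n
      using X_diff[OF g u] X_abs[OF X_diff[OF g u]] by blast+
  qed (use mono in auto)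
  then have "(\<lambda>n. \<psi> g - \<psi> (u n)) \<longlonglongrightarrow> 0"
    using linear_functional_on_diff[OF lf g u] by simp
  then show ?thesis
    using tendsto_diff[OF tendsto_const[of "\<psi> g"]] by (force simp: LIMSEQ_iff)
qed

text \<open>The sets on which \<open>\<psi>\<close> carries no mass; for strictly positive functionals these are
  exactly the null sets.\<close>

definition annihilated_sets :: "(('a \<Rightarrow> real) \<Rightarrow> real) \<Rightarrow> 'a set set" where
  "annihilated_sets \<psi> = {A \<in> sets M. \<forall>h\<in>X. (AE x in M. h x \<noteq> 0 \<longrightarrow> x \<in> A) \<longrightarrow> \<psi> h = 0}"

lemma annihilated_setsD:
  "A \<in> annihilated_sets \<psi> \<Longrightarrow> h \<in> X \<Longrightarrow> (AE x in M. h x \<noteq> 0 \<longrightarrow> x \<in> A) \<Longrightarrow> \<psi> h = 0"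
  and annihilated_sets_sets: "A \<in> annihilated_sets \<psi> \<Longrightarrow> A \<in> sets M"
  unfolding annihilated_sets_def by blast+

lemma empty_in_annihilated_sets: "linear_functional_on M X \<psi> \<Longrightarrow> {} \<in> annihilated_sets \<psi>"
  unfolding annihilated_sets_def using linear_functional_on_AE_zero by auto

lemma annihilated_sets_UN:
  fixes A :: "nat \<Rightarrow> 'a set"
  assumes lf: "linear_functional_on M X \<psi>" and oc: "order_continuous M X \<psi>"
    and A: "\<And>n. A n \<in> annihilated_sets \<psi>"
  shows "(\<Union>n. A n) \<in> annihilated_sets \<psi>"
proof -
  have A_sets: "A n \<in> sets M" for n
    using A annihilated_sets_sets by blast
  define U where "U n = (\<Union>k<n. A k)" for n
  have U_sets: "U n \<in> sets M" for n
    unfolding U_def using A_sets by auto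
  have "\<psi> h = 0" if h: "h \<in> X" and supp: "AE x in M. h x \<noteq> 0 \<longrightarrow> x \<in> (\<Union>n. A n)" for h
  proof -
    define piece where "piece k = (\<lambda>x. indicator (A k - U k) x * h x)" for k
    have piece: "piece k \<in> X" for k
      unfolding piece_def using A_sets U_sets by (intro X_indicator_mult[OF h]) auto
    have piece_zero: "\<psi> (piece k) = 0" for k
      by (rule annihilated_setsD[OF A piece]) (auto simp: piece_def indicator_def)
    have "(\<lambda>x. indicator (U n) x * h x) = (\<lambda>x. \<Sum>k<n. piece k x)" for n
    proof (induction n)
      case (Suc n)
      have "indicator (U (Suc n)) x = (indicator (U n) x + indicator (A n - U n) x :: real)" for x
        unfolding U_def by (auto simp: indicator_def lessThan_Suc)
      then show ?case
        using Suc.IH unfolding piece_def by (auto simp: fun_eq_iff distrib_right dest: fun_cong)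
    qed (simp add: U_def)
    then have "\<psi> (\<lambda>x. indicator (U n) x * h x) = 0" for n
      using linear_functional_on_sum[OF lf, of "{..<n}" piece] piece piece_zero by simp
    moreover have "(\<lambda>n. \<psi> (\<lambda>x. indicator (U n) x * h x)) \<longlonglongrightarrow> \<psi> h"
    proof (rule order_continuous_tendsto_eventually_eq[OF lf oc h X_indicator_mult[OF h U_sets]])
      have "U m \<subseteq> U n" if "m \<le> n" for m n
        unfolding U_def using that by (intro UN_mono) auto
      then show "AE \<omega> in M. \<forall>m n. m \<le> n \<longrightarrow>
          \<bar>h \<omega> - indicator (U n) \<omega> * h \<omega>\<bar> \<le> \<bar>h \<omega> - indicator (U m) \<omega> * h \<omega>\<bar>"
        by (auto simp: indicator_def)
      show "AE \<omega> in M. \<exists>n. indicator (U n) \<omega> * h \<omega> = h \<omega>"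
        using supp
      proof eventually_elim
        case (elim \<omega>)
        show ?case
        proof (cases "h \<omega> = 0")
          case False
          then obtain k where "\<omega> \<in> A k"
            using elim by auto
          then show ?thesis
            by (intro exI[of _ "Suc k"]) (auto simp: U_def indicator_def)
        qed simp
      qed
    qed
    ultimately have "(\<lambda>n. 0) \<longlonglongrightarrow> \<psi> h"
      by simp
    then show ?thesis
      by (simp add: LIMSEQ_const_iff)
  qed
  then show ?thesis
    unfolding annihilated_sets_def using A_sets by blast
qed

lemma annihilated_sets_Un:
  assumes "linear_functional_on M X \<psi>" "order_continuous M X \<psi>"
    and "A \<in> annihilated_sets \<psi>" "B \<in> annihilated_sets \<psi>"
  shows "A \<union> B \<in> annihilated_sets \<psi>"
proof -
  define F where "F n = (if n = 0 then A else if n = 1 then B else {})" for n :: nat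
  have "(\<Union>n. F n) \<in> annihilated_sets \<psi>"
    using assms empty_in_annihilated_sets by (intro annihilated_sets_UN) (auto simp: F_def)
  moreover have "(\<Union>n. F n) = A \<union> B"
    unfolding F_def by (auto split: if_splits intro: exI[of _ 0] exI[of _ 1])
  ultimately show ?thesis
    by simp
qed

lemma annihilated_sets_antimono:
  assumes "linear_functional_on M X \<psi>" "positive_functional \<psi>"
    and "linear_functional_on M X \<phi>" "positive_functional \<phi>"
    and c: "0 < c" and dominated: "\<And>g. g \<in> X \<Longrightarrow> (AE x in M. 0 \<le> g x) \<Longrightarrow> c * \<phi> g \<le> \<psi> g"
  shows "annihilated_sets \<psi> \<subseteq> annihilated_sets \<phi>"
proof
  fix A
  assume A: "A \<in> annihilated_sets \<psi>"
  have "\<phi> h = 0" if h: "h \<in> X" "AE x in M. h x \<noteq> 0 \<longrightarrow> x \<in> A" for h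
  proof -
    have "\<psi> (\<lambda>x. \<bar>h x\<bar>) = 0"
      using h by (intro annihilated_setsD[OF A X_abs]) auto
    then have "c * \<phi> (\<lambda>x. \<bar>h x\<bar>) \<le> 0"
      using dominated[OF X_abs[OF h(1)]] by simp
    moreover have "0 \<le> \<phi> (\<lambda>x. \<bar>h x\<bar>)"
      using assms(4) X_abs[OF h(1)] by (intro positive_functionalD) auto
    ultimately have "\<phi> (\<lambda>x. \<bar>h x\<bar>) = 0"
      using c by (simp add: mult_le_0_iff)
    then show ?thesis
      using positive_functional_abs_le[OF assms(3,4) h(1)] by simp
  qed
  then show "A \<in> annihilated_sets \<phi>"
    using annihilated_sets_sets[OF A] unfolding annihilated_sets_def by blast
qed

lemma positive_support_in_annihilated_sets:
  assumes lf: "linear_functional_on M X \<psi>" and pos: "positive_functional \<psi>"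
    and oc: "order_continuous M X \<psi>"
    and f: "f \<in> X" "AE x in M. 0 \<le> f x" and zero: "\<psi> f = 0"
  shows "{x \<in> space M. 0 < f x} \<in> annihilated_sets \<psi>"
proof -
  have "\<psi> h = 0" if h: "h \<in> X" and supp: "AE x in M. h x \<noteq> 0 \<longrightarrow> x \<in> {x \<in> space M. 0 < f x}" for h
  proof -
    text \<open>\<open>\<bar>h\<bar>\<close> is the increasing limit of \<open>min \<bar>h\<bar> (n f\<^sup>+)\<close>, on which \<open>\<psi>\<close> vanishes.\<close>
    define fp where "fp x = max (f x) 0" for x
    have fp: "fp \<in> X"
      using f X_measurable[OF f(1)] unfolding fp_def by (intro X_solid[OF f(1)]) auto
    have "AE x in M. f x = fp x"
      using f(2) by eventually_elim (simp add: fp_def)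
    then have "\<psi> fp = 0"
      using linear_functional_on_AE_cong[OF lf f(1) fp] zero by simp
    define m where "m n x = min \<bar>h x\<bar> (real n * fp x)" for n x
    have "m n \<in> borel_measurable M" for n
      using X_measurable[OF h] X_measurable[OF fp] unfolding m_def by measurable
    then have m: "m n \<in> X" for n
      by (rule X_solid[OF h]) (auto simp: m_def fp_def)
    have "\<psi> (m n) = 0" for n
    proof -
      have "\<psi> (m n) \<le> \<psi> (\<lambda>x. real n * fp x)"
        by (rule positive_functional_mono[OF lf pos m X_smult[OF fp]]) (auto simp: m_def)
      also have "\<dots> = 0"
        using linear_functional_on_smult[OF lf fp] \<open>\<psi> fp = 0\<close> by simp
      finally have "\<psi> (m n) \<le> 0" .
      moreover have "0 \<le> \<psi> (m n)"
        by (rule positive_functionalD[OF pos m]) (simp add: m_def fp_def)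
      ultimately show ?thesis
        by simp
    qed
    moreover have "(\<lambda>n. \<psi> (m n)) \<longlonglongrightarrow> \<psi> (\<lambda>x. \<bar>h x\<bar>)"
    proof (rule order_continuous_tendsto_eventually_eq[OF lf oc X_abs[OF h] m])
      have "\<bar>\<bar>h \<omega>\<bar> - m n \<omega>\<bar> \<le> \<bar>\<bar>h \<omega>\<bar> - m k \<omega>\<bar>" if "k \<le> n" for k n \<omega>
      proof -
        have "real k * fp \<omega> \<le> real n * fp \<omega>"
          using that by (intro mult_right_mono) (auto simp: fp_def)
        then have "m k \<omega> \<le> m n \<omega>"
          unfolding m_def by (intro min.mono) simp_all
        moreover have "m n \<omega> \<le> \<bar>h \<omega>\<bar>"
          unfolding m_def by simp
        ultimately show ?thesis
          by linarith
      qed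
      then show "AE \<omega> in M. \<forall>k n. k \<le> n \<longrightarrow> \<bar>\<bar>h \<omega>\<bar> - m n \<omega>\<bar> \<le> \<bar>\<bar>h \<omega>\<bar> - m k \<omega>\<bar>"
        by simp
      show "AE \<omega> in M. \<exists>n. m n \<omega> = \<bar>h \<omega>\<bar>"
        using supp
      proof eventually_elim
        case (elim \<omega>)
        show ?case
        proof (cases "h \<omega> = 0")
          case False
          then have "0 < fp \<omega>"
            using elim by (auto simp: fp_def)
          then obtain n where "\<bar>h \<omega>\<bar> < real n * fp \<omega>"
            using ex_less_of_nat_mult by blast
          then show ?thesis
            by (intro exI[of _ n]) (simp add: m_def)
        qed (intro exI[of _ 0], simp add: m_def)
      qed
    qed
    ultimately have "(\<lambda>n. 0) \<longlonglongrightarrow> \<psi> (\<lambda>x. \<bar>h x\<bar>)"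
      by simp
    then have "\<psi> (\<lambda>x. \<bar>h x\<bar>) = 0"
      by (simp add: LIMSEQ_const_iff)
    then show ?thesis
      using positive_functional_abs_le[OF lf pos h] by simp
  qed
  moreover have "{x \<in> space M. 0 < f x} \<in> sets M"
    using X_measurable[OF f(1)] by measurable
  ultimately show ?thesis
    unfolding annihilated_sets_def by blast
qed

end

lemma le_if_less_add_inverse_Suc:
  fixes x y :: real
  assumes "\<And>n. x < y + inverse (real (Suc n))"
  shows "x \<le> y"
proof (rule ccontr)
  assume "\<not> x \<le> y"
  then obtain n where "inverse (real (Suc n)) < x - y"
    using reals_Archimedean[of "x - y"] by auto
  then show False
    using assms[of n] by linarith
qed

locale weakly_closed_cone = bfs M X N + prob_space M
  for M :: "'a measure" and X N +
  fixes C :: "('a \<Rightarrow> real) set"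
  assumes closed: "closedin (weak_topology M X) C"
    and cone_add: "\<And>f g. f \<in> C \<Longrightarrow> g \<in> C \<Longrightarrow> (\<lambda>x. f x + g x) \<in> C"
    and cone_scale: "\<And>f c. f \<in> C \<Longrightarrow> 0 \<le> c \<Longrightarrow> (\<lambda>x. c * f x) \<in> C"
    and nonpos_subset: "{f \<in> X. ae_le M f (\<lambda>x. 0)} \<subseteq> C"
    and pointed: "\<forall>f\<in>C. ae_le M (\<lambda>x. 0) f \<longrightarrow> (AE x in M. f x = 0)"
begin

definition polar :: "(('a \<Rightarrow> real) \<Rightarrow> real) set" where
  "polar = {\<psi> \<in> order_cont_dual M X. \<forall>c\<in>C. \<psi> c \<le> 0}"

definition annihilated_measure :: "(('a \<Rightarrow> real) \<Rightarrow> real) \<Rightarrow> real" where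
  "annihilated_measure \<psi> = Sup (measure M ` annihilated_sets \<psi>)"

lemma polarD:
  assumes "\<psi> \<in> polar"
  shows "\<psi> \<in> order_cont_dual M X" "linear_functional_on M X \<psi>" "order_continuous M X \<psi>"
    and "c \<in> C \<Longrightarrow> \<psi> c \<le> 0"
  using assms order_cont_dualD unfolding polar_def by auto

lemma polar_positive:
  assumes "\<psi> \<in> polar"
  shows "positive_functional \<psi>"
  unfolding positive_functional_def
proof (intro ballI impI)
  fix g
  assume g: "g \<in> X" "AE x in M. 0 \<le> g x"
  then have "(\<lambda>x. -1 * g x) \<in> {f \<in> X. ae_le M f (\<lambda>x. 0)}"
    using X_smult[OF g(1), of "-1"] by (auto simp: ae_le_def)
  then have "(\<lambda>x. -1 * g x) \<in> C"
    using nonpos_subset by blast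
  then show "0 \<le> \<psi> g"
    using polarD(4)[OF assms] linear_functional_on_smult[OF polarD(2)[OF assms] g(1), of "-1"] by force
qed

lemma polar_add: "\<psi> \<in> polar \<Longrightarrow> \<phi> \<in> polar \<Longrightarrow> (\<lambda>g. \<psi> g + \<phi> g) \<in> polar"
  unfolding polar_def by (auto intro: order_cont_dual_add add_nonpos_nonpos)

lemma polar_separates_nonneg:
  assumes f: "f \<in> X" "AE x in M. 0 \<le> f x" "\<not> (AE x in M. f x = 0)"
  shows "\<exists>\<psi>\<in>polar. 0 < \<psi> f"
proof -
  have "f \<notin> C"
    using pointed f by (auto simp: ae_le_def)
  moreover have "(\<lambda>x. 0) \<in> C"
    using nonpos_subset X_zero by (auto simp: ae_le_def)
  ultimately show ?thesis
    using weakly_closed_cone_separation[OF closed cone_add cone_scale _ f(1)] unfolding polar_def by blast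
qed

lemma measure_le_annihilated_measure:
  "A \<in> annihilated_sets \<psi> \<Longrightarrow> measure M A \<le> annihilated_measure \<psi>"
  unfolding annihilated_measure_def by (rule cSup_upper) (auto intro: bdd_aboveI[of _ 1])

lemma annihilated_measure_attained:
  assumes "\<psi> \<in> polar"
  shows "\<exists>A\<in>annihilated_sets \<psi>. measure M A = annihilated_measure \<psi>"
proof -
  have nonempty: "measure M ` annihilated_sets \<psi> \<noteq> {}"
    using empty_in_annihilated_sets[OF polarD(2)[OF assms]] by blast
  have bdd: "bdd_above (measure M ` annihilated_sets \<psi>)"
    by (rule bdd_aboveI[of _ 1]) auto
  have "\<exists>A\<in>annihilated_sets \<psi>. annihilated_measure \<psi> - inverse (real (Suc n)) < measure M A" for n
  proof -
    have "annihilated_measure \<psi> - inverse (real (Suc n)) < annihilated_measure \<psi>"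
      by simp
    then show ?thesis
      unfolding annihilated_measure_def using less_cSup_iff[OF nonempty bdd] by blast
  qed
  then obtain A where A: "\<And>n. A n \<in> annihilated_sets \<psi>"
    and large: "\<And>n. annihilated_measure \<psi> - inverse (real (Suc n)) < measure M (A n)"
    by metis
  have UN: "(\<Union>n. A n) \<in> annihilated_sets \<psi>"
    by (rule annihilated_sets_UN[OF polarD(2,3)[OF assms] A])
  have le_UN: "measure M (A n) \<le> measure M (\<Union>n. A n)" for n
    using annihilated_sets_sets[OF UN] by (intro finite_measure_mono) auto
  have "annihilated_measure \<psi> < measure M (\<Union>n. A n) + inverse (real (Suc n))" for n
    using large[of n] le_UN[of n] by linarith
  then have "annihilated_measure \<psi> \<le> measure M (\<Union>n. A n)"
    by (rule le_if_less_add_inverse_Suc)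
  then show ?thesis
    using UN measure_le_annihilated_measure[OF UN] by (intro bexI[OF _ UN]) linarith
qed

text \<open>Exhaustion: take a sequence in \<open>polar\<close> along which the largest annihilated measure
  approaches its infimum; a positive series of its members lies in \<open>polar\<close> and has fewer
  annihilated sets than each member.\<close>

lemma polar_minimal_exists:
  "\<exists>\<Phi>\<in>polar. \<forall>\<psi>\<in>polar. annihilated_measure \<Phi> \<le> annihilated_measure \<psi>"
proof -
  have "(\<lambda>g. 0) \<in> polar"
    unfolding polar_def using order_cont_dual_zero by simp
  then have nonempty: "annihilated_measure ` polar \<noteq> {}"
    by blast
  have bdd: "bdd_below (annihilated_measure ` polar)"
    using measure_le_annihilated_measure[OF empty_in_annihilated_sets[OF polarD(2)]]
    by (intro bdd_belowI[of _ 0]) auto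
  define \<delta> where "\<delta> = Inf (annihilated_measure ` polar)"
  have "\<exists>\<psi>\<in>polar. annihilated_measure \<psi> < \<delta> + inverse (real (Suc n))" for n
  proof -
    have "\<delta> < \<delta> + inverse (real (Suc n))"
      by simp
    then show ?thesis
      unfolding \<delta>_def using cInf_less_iff[OF nonempty bdd] by blast
  qed
  then obtain \<psi> where \<psi>: "\<And>n. \<psi> n \<in> polar"
    and small: "\<And>n. annihilated_measure (\<psi> n) < \<delta> + inverse (real (Suc n))"
    by metis
  obtain \<Phi> where \<Phi>: "\<Phi> \<in> order_cont_dual M X" "positive_functional \<Phi>"
    and dominates: "\<forall>n. \<exists>c>0. \<forall>g\<in>X. (AE x in M. 0 \<le> g x) \<longrightarrow> c * \<psi> n g \<le> \<Phi> g"
    and nonpos: "\<forall>g\<in>X. (\<forall>n. \<psi> n g \<le> 0) \<longrightarrow> \<Phi> g \<le> 0"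
    using positive_functional_series[of \<psi>] polarD(1)[OF \<psi>] polar_positive[OF \<psi>] by blast
  have \<Phi>_polar: "\<Phi> \<in> polar"
    using \<Phi>(1) nonpos polarD(4)[OF \<psi>] closedin_subset[OF closed] topspace_weak_topology
    unfolding polar_def by blast
  have "annihilated_measure \<Phi> \<le> annihilated_measure (\<psi> n)" for n
  proof -
    obtain c where "0 < c" "\<forall>g\<in>X. (AE x in M. 0 \<le> g x) \<longrightarrow> c * \<psi> n g \<le> \<Phi> g"
      using dominates by blast
    then have "annihilated_sets \<Phi> \<subseteq> annihilated_sets (\<psi> n)"
      using polarD(2)[OF \<Phi>_polar] \<Phi>(2) polarD(2)[OF \<psi>] polar_positive[OF \<psi>]
      by (intro annihilated_sets_antimono) auto
    then show ?thesis
      unfolding annihilated_measure_def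
      using empty_in_annihilated_sets[OF polarD(2)[OF \<Phi>_polar]]
      by (intro cSup_subset_mono bdd_aboveI[of _ 1]) auto
  qed
  then have "annihilated_measure \<Phi> \<le> \<delta>"
    using small by (intro le_if_less_add_inverse_Suc) (meson order_le_less_trans)
  then show ?thesis
    using \<Phi>_polar cInf_lower[OF _ bdd] unfolding \<delta>_def by (meson imageI order_trans)
qed

text \<open>If a minimal \<open>\<Phi>\<close> vanished on some \<open>f \<ge> 0\<close>, \<open>f \<noteq> 0\<close>, the support of \<open>f\<close> would be
  annihilated by \<open>\<Phi>\<close> but not by the \<open>\<psi>\<close> separating \<open>f\<close> from \<open>C\<close>; then \<open>\<Phi> + \<psi>\<close> would have
  a maximal annihilated set which can be enlarged by that support, contradicting minimality.\<close>

lemma polar_minimal_strictly_positive: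
  assumes \<Phi>: "\<Phi> \<in> polar" and minimal: "\<And>\<psi>. \<psi> \<in> polar \<Longrightarrow> annihilated_measure \<Phi> \<le> annihilated_measure \<psi>"
  shows "strictly_positive M X \<Phi>"
  unfolding strictly_positive_def
proof (intro ballI impI)
  fix f
  assume f: "f \<in> X" "ae_le M (\<lambda>x. 0) f \<and> \<not> (AE x in M. f x = 0)"
  then have f_nonneg: "AE x in M. 0 \<le> f x"
    by (simp add: ae_le_def)
  show "0 < \<Phi> f"
  proof (rule ccontr)
    assume "\<not> 0 < \<Phi> f"
    then have "\<Phi> f = 0"
      using positive_functionalD[OF polar_positive[OF \<Phi>] f(1) f_nonneg] by simp
    define S where "S = {x \<in> space M. 0 < f x}"
    have S: "S \<in> annihilated_sets \<Phi>"
      unfolding S_def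
      by (rule positive_support_in_annihilated_sets[OF polarD(2)[OF \<Phi>] polar_positive[OF \<Phi>]
            polarD(3)[OF \<Phi>] f(1) f_nonneg \<open>\<Phi> f = 0\<close>])
    obtain \<psi> where \<psi>: "\<psi> \<in> polar" "0 < \<psi> f"
      using polar_separates_nonneg f f_nonneg by blast
    define \<theta> where "\<theta> g = \<Phi> g + \<psi> g" for g
    have \<theta>: "\<theta> \<in> polar"
      unfolding \<theta>_def using polar_add[OF \<Phi> \<psi>(1)] .
    obtain B where B: "B \<in> annihilated_sets \<theta>" "measure M B = annihilated_measure \<theta>"
      using annihilated_measure_attained[OF \<theta>] by blast
    have "annihilated_sets \<theta> \<subseteq> annihilated_sets \<Phi>" "annihilated_sets \<theta> \<subseteq> annihilated_sets \<psi>"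
      using polarD(2)[OF \<theta>] polarD(2)[OF \<Phi>] polarD(2)[OF \<psi>(1)] polar_positive[OF \<theta>]
        polar_positive[OF \<Phi>] polar_positive[OF \<psi>(1)]
        positive_functionalD[OF polar_positive[OF \<Phi>]] positive_functionalD[OF polar_positive[OF \<psi>(1)]]
      by (intro annihilated_sets_antimono[where c = 1]; simp add: \<theta>_def)+
    then have B_\<Phi>: "B \<in> annihilated_sets \<Phi>" and B_\<psi>: "B \<in> annihilated_sets \<psi>"
      using B(1) by blast+
    have "measure M (B \<union> S) \<le> annihilated_measure \<Phi>"
      by (rule measure_le_annihilated_measure[OF annihilated_sets_Un[OF polarD(2,3)[OF \<Phi>] B_\<Phi> S]])
    also have "\<dots> \<le> measure M B"
      using minimal[OF \<theta>] B(2) by simp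
    finally have "measure M (S - B) = 0"
      using finite_measure_Union'[OF annihilated_sets_sets[OF B(1)] annihilated_sets_sets[OF S]]
        measure_nonneg[of M "S - B"] by simp
    then have "AE x in M. x \<notin> S - B"
      using annihilated_sets_sets[OF B(1)] annihilated_sets_sets[OF S]
      by (intro AE_not_in) (auto simp: emeasure_eq_measure)
    then have "AE x in M. f x \<noteq> 0 \<longrightarrow> x \<in> B"
      using f_nonneg AE_space by eventually_elim (auto simp: S_def)
    then have "\<psi> f = 0"
      by (rule annihilated_setsD[OF B_\<psi> f(1)])
    then show False
      using \<psi>(2) by simp
  qed
qed

end

theorem proposition3p5:
  fixes M :: "'a measure" and X :: "('a \<Rightarrow> real) set"
    and N :: "('a \<Rightarrow> real) \<Rightarrow> real" and C :: "('a \<Rightarrow> real) set"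
  assumes "prob_space M"
    and "banach_function_space M X N"
    and "closedin (weak_topology M X) C"
    and "\<And>f g. f \<in> C \<Longrightarrow> g \<in> C \<Longrightarrow> (\<lambda>x. f x + g x) \<in> C"
    and "\<And>f c. f \<in> C \<Longrightarrow> c \<ge> 0 \<Longrightarrow> (\<lambda>x. c * f x) \<in> C"
    and "{f \<in> X. ae_le M f (\<lambda>x. 0)} \<subseteq> C"
    and "\<forall>f\<in>C. ae_le M (\<lambda>x. 0) f \<longrightarrow> (AE x in M. f x = 0)"
  shows "\<exists>\<phi>\<in>order_cont_dual M X. strictly_positive M X \<phi> \<and> (\<forall>f\<in>C. \<phi> f \<le> 0)"
proof -
  interpret weakly_closed_cone M X N C
    using assms by (intro weakly_closed_cone.intro bfs.intro weakly_closed_cone_axioms.intro) auto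
  obtain \<Phi> where \<Phi>: "\<Phi> \<in> polar" and minimal: "\<And>\<psi>. \<psi> \<in> polar \<Longrightarrow> annihilated_measure \<Phi> \<le> annihilated_measure \<psi>"
    using polar_minimal_exists by blast
  then have "strictly_positive M X \<Phi>"
    by (rule polar_minimal_strictly_positive)
  then show ?thesis
    using \<Phi> polarD[OF \<Phi>] by blast
qed

end
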